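(* Let $z>0$ and $k\ge0$ be integers. For $$v<-\log\left(1-\frac{1-2q}{1-h^z}\right)$$ we have $$\mathbf E\left(e^{v\xi(z,\infty)};\,\xi(0,\infty)=k\right)=(1-2q)(2q)^k\varphi^k(v)\psi(v),$$ $$\mathbf E\left(e^{v\xi(-z,\infty)};\,\xi(0,\infty)=k\right)=(1-2q)(2q)^k\varphi^k(v),$$ where $$\varphi(v)=\frac{1-\frac{4q^2-h^z}{2q(1-2q)}(e^v-1)}{1-\frac{2q-h^z}{1-2q}(e^v-1)},\qquad \psi(v)=\frac{e^v}{1-\frac{2q-h^z}{1-2q}(e^v-1)}.$$ Moreover, for $k=1,2,\dots$ $$\mathbf P(\Xi(\{0,z\},\infty)=k)=\frac{1-2q}{2h^{z/2}}\left(\left(\frac{2q+h^{z/2}}{1+h^{z/2}}\right)^k-\left(\frac{2q-h^{z/2}}{1-h^{z/2}}\right)^k\right),$$ and for $k=0,1,2,\dots$ $$\mathbf P(\Xi(\{0,-z\},\infty)=k)=\frac{1-2q}{2}\left(\left(\frac{2q+h^{z/2}}{1+h^{z/2}}\right)^k+\left(\frac{2q-h^{z/2}}{1-h^{z/2}}\right)^k\right).$$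
   Context: Let $0<q<p<1$ with $p+q=1$ and $h=q/p$. Let $X_1,X_2,\dots$ be i.i.d. with $\mathbf P(X_1=1)=p$, $\mathbf P(X_1=-1)=q$, $S_0=0$, $S_n=X_1+\dots+X_n$. For $x\in\mathbb Z$, $\xi(x,\infty)=\#\{k\ge1:S_k=x\}$, and for $A\subset\mathbb Z$, $\Xi(A,\infty)=\sum_{x\in A}\xi(x,\infty)$. $\mathbf E(Y;E)$ denotes $\mathbf E(Y\mathbf 1_E)$. *)

theory Defs
  imports "HOL-Probability.Probability"
begin

definition walk :: "(nat \<Rightarrow> 'a \<Rightarrow> int) \<Rightarrow> nat \<Rightarrow> 'a \<Rightarrow> int" where
  "walk X n \<omega> = (\<Sum>i\<in>{1..n}. X i \<omega>)"

definition xi :: "(nat \<Rightarrow> 'a \<Rightarrow> int) \<Rightarrow> int \<Rightarrow> 'a \<Rightarrow> nat" where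
  "xi X x \<omega> = card {k::nat. k \<ge> 1 \<and> walk X k \<omega> = x}"

definition Xi :: "(nat \<Rightarrow> 'a \<Rightarrow> int) \<Rightarrow> int set \<Rightarrow> 'a \<Rightarrow> nat" where
  "Xi X A \<omega> = (\<Sum>x\<in>A. xi X x \<omega>)"

definition phi_fun :: "real \<Rightarrow> nat \<Rightarrow> real \<Rightarrow> real" where
  "phi_fun q z v = (let h = q / (1 - q) in
     (1 - (4*q^2 - h^z) / (2*q*(1 - 2*q)) * (exp v - 1)) /
     (1 - (2*q - h^z) / (1 - 2*q) * (exp v - 1)))"

definition psi_fun :: "real \<Rightarrow> nat \<Rightarrow> real \<Rightarrow> real" where
  "psi_fun q z v = (let h = q / (1 - q) in
     exp v / (1 - (2*q - h^z) / (1 - 2*q) * (exp v - 1)))"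

end

theory Submission
  imports Defs
begin

text \<open>
  Pass to the canonical model, in which the steps form an i.i.d.\ stream. Decomposing a path at
  its first visit to \<open>{0, c}\<close> (\<open>c = \<plusminus>z\<close>) by the strong Markov property turns the joint law of the
  numbers of visits to \<open>0\<close> and to \<open>c\<close> into a two-type linear recursion whose coefficients, the
  first-visit and escape probabilities, are gambler's-ruin probabilities. Summing the recursion
  against \<open>e\<^sup>v\<^sup>m\<close> gives the generating functions, and the law of the total number of visits obeys a
  second order linear recurrence with characteristic roots \<open>(2q \<plusminus> h\<^sup>z\<^sup>/\<^sup>2) / (1 \<plusminus> h\<^sup>z\<^sup>/\<^sup>2)\<close>.
  These probabilities sum to one, so the visits are a.s.\ finitely many, which is what identifies
  the cardinalities in the definition of \<open>xi\<close> with the local times.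
\<close>

section \<open>Walks driven by a stream of steps\<close>

definition unit_step :: "int \<Rightarrow> int" where
  "unit_step x = (if x = 1 then 1 else -1)"

definition stream_walk :: "int stream \<Rightarrow> nat \<Rightarrow> int" where
  "stream_walk s n = (\<Sum>i<n. unit_step (s !! i))"

lemma stream_walk_0 [simp]: "stream_walk s 0 = 0"
  by (simp add: stream_walk_def)

lemma stream_walk_Suc: "stream_walk s (Suc n) = stream_walk s n + unit_step (s !! n)"
  by (simp add: stream_walk_def)

lemma stream_walk_Cons_Suc [simp]: "stream_walk (x ## s) (Suc n) = unit_step x + stream_walk s n"
  by (induction n) (auto simp: stream_walk_Suc)

lemma stream_walk_sdrop: "stream_walk (sdrop n s) k = stream_walk s (n + k) - stream_walk s n"
  by (induction k) (auto simp: stream_walk_Suc sdrop_snth add.commute)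

lemma stream_walk_shift_stake: "k \<le> n \<Longrightarrow> stream_walk (stake n s @- t) k = stream_walk s k"
  by (induction k) (auto simp: stream_walk_Suc)

lemma stream_walk_Suc_cases:
  "stream_walk s (Suc k) = stream_walk s k + 1 \<or> stream_walk s (Suc k) = stream_walk s k - 1"
  by (auto simp: stream_walk_Suc unit_step_def)

lemma abs_stream_walk_le: "\<bar>stream_walk s k\<bar> \<le> int k"
proof (induction k)
  case (Suc k)
  then show ?case using stream_walk_Suc_cases[of s k] by auto
qed simp

lemma stream_walk_below_until_hit:
  assumes "y < d" "\<forall>k<m. y + stream_walk s k \<noteq> d"
  shows "k < m \<Longrightarrow> y + stream_walk s k < d" and "y + stream_walk s m \<le> d"
proof -
  show below: "y + stream_walk s k < d" if "k < m" for k
    using that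
  proof (induction k)
    case (Suc k)
    then have "y + stream_walk s k < d" "y + stream_walk s (Suc k) \<noteq> d"
      using assms(2) by auto
    then show ?case using stream_walk_Suc_cases[of s k] by auto
  qed (use assms in simp)
  show "y + stream_walk s m \<le> d"
    using below[of "m - 1"] stream_walk_Suc_cases[of s "m - 1"] assms(1) by (cases m) auto
qed

lemma stream_walk_above_until_hit:
  assumes "d < y" "\<forall>k<m. y + stream_walk s k \<noteq> d"
  shows "k < m \<Longrightarrow> d < y + stream_walk s k" and "d \<le> y + stream_walk s m"
proof -
  show above: "d < y + stream_walk s k" if "k < m" for k
    using that
  proof (induction k)
    case (Suc k)
    then have "d < y + stream_walk s k" "y + stream_walk s (Suc k) \<noteq> d"
      using assms(2) by auto
    then show ?case using stream_walk_Suc_cases[of s k] by auto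
  qed (use assms in simp)
  show "d \<le> y + stream_walk s m"
    using above[of "m - 1"] stream_walk_Suc_cases[of s "m - 1"] assms(1) by (cases m) auto
qed

lemma pred_stake:
  "Measurable.pred (stream_space (count_space UNIV)) (\<lambda>s::int stream. Q (stake n s))"
proof -
  have "(Q \<circ> stake n) \<in> measurable (stream_space (count_space UNIV)) (count_space UNIV)"
    by (rule measurable_comp[OF measurable_stake]) simp
  then show ?thesis by (simp add: comp_def)
qed

lemma pred_stream_walk_eq [measurable]:
  "Measurable.pred (stream_space (count_space UNIV)) (\<lambda>s. y + stream_walk s m = d)"
  using pred_stake[where n=m and Q="\<lambda>l. y + (\<Sum>i<m. unit_step (l ! i)) = d"]
  by (simp add: stream_walk_def)

lemma pred_finite_card_eq:
  assumes [measurable]: "\<And>k. Measurable.pred M (P k)"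
  shows "Measurable.pred M (\<lambda>s. finite {k::nat. P k s} \<and> card {k. P k s} = j)"
proof -
  have "(\<lambda>s. finite {k::nat. P k s} \<and> card {k. P k s} = j) =
        (\<lambda>s. \<exists>xs. distinct xs \<and> length xs = j \<and> (\<forall>k. P k s = (k \<in> set xs)))"
    by (intro ext) (metis (mono_tags) distinct_card finite_distinct_list finite_set set_eq_iff mem_Collect_eq)
  also have "Measurable.pred M \<dots>"
    by measurable
  finally show ?thesis .
qed

lemma pred_finite:
  assumes [measurable]: "\<And>k. Measurable.pred M (P k)"
  shows "Measurable.pred M (\<lambda>s. finite {k::nat. P k s})"
proof -
  have "(\<lambda>s. finite {k::nat. P k s}) = (\<lambda>s. \<exists>n. \<forall>k. P k s \<longrightarrow> k < n)"
    by (auto simp: finite_nat_set_iff_bounded)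
  also have "Measurable.pred M \<dots>"
    by measurable
  finally show ?thesis .
qed

section \<open>The i.i.d.\ step stream\<close>

text \<open>Every value other than \<open>1\<close> acts as a down-step (see \<open>unit_step\<close>), so the step law \<open>N\<close> only
  has to put mass \<open>p\<close> on \<open>1\<close>.\<close>

locale pm_walk =
  fixes N :: "int measure" and p q :: real
  assumes prob_space_N: "prob_space N"
    and sets_N: "sets N = sets (count_space UNIV)"
    and emeasure_N_up: "emeasure N {1} = ennreal p"
    and emeasure_N_down: "emeasure N (UNIV - {1}) = ennreal q"
    and q_pos: "0 < q" and q_less_p: "q < p" and p_plus_q: "p + q = 1"
begin

abbreviation "S \<equiv> stream_space N"

definition Pr :: "(int stream \<Rightarrow> bool) \<Rightarrow> real" where
  "Pr P = measure S {s. P s}"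

definition h :: real where
  "h = q / p"

sublocale N: prob_space N
  by (rule prob_space_N)

sublocale S: prob_space S
  by (rule N.prob_space_stream_space)

lemma space_N: "space N = UNIV"
  using sets_eq_imp_space_eq[OF sets_N] by simp

lemma space_S [simp]: "space S = UNIV"
  by (simp add: space_stream_space space_N)

lemma sets_S: "sets S = sets (stream_space (count_space UNIV))"
  by (rule sets_stream_space_cong[OF sets_N])

lemma measurable_S: "f \<in> measurable (stream_space (count_space UNIV)) K \<Longrightarrow> f \<in> measurable S K"
  using measurable_cong_sets[OF sets_S refl] by blast

lemma sets_S_Collect: "Measurable.pred (stream_space (count_space UNIV)) P \<Longrightarrow> {s. P s} \<in> sets S"
  unfolding pred_def by (simp add: sets_S space_stream_space)

lemma measurable_N [measurable]: "f \<in> borel_measurable N"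
  by (simp add: measurable_cong_sets[OF sets_N refl])

lemma p_pos: "0 < p"
  using q_pos q_less_p by simp

lemma q_less_half: "q < 1/2"
  using q_less_p p_plus_q by simp

lemma h_pos: "0 < h" and h_less_1: "h < 1" and p_times_h: "p * h = q"
  using q_pos q_less_p p_pos by (auto simp: h_def)

lemma Pr_nonneg: "0 \<le> Pr P"
  by (simp add: Pr_def)

lemma Pr_le_1: "Pr P \<le> 1"
  unfolding Pr_def by (rule S.prob_le_1)

lemma prob_UNIV [simp]: "S.prob UNIV = 1"
  using S.prob_space by simp

lemma Pr_mono: "{s. Q s} \<in> sets S \<Longrightarrow> (\<And>s. P s \<Longrightarrow> Q s) \<Longrightarrow> Pr P \<le> Pr Q"
  unfolding Pr_def by (intro S.finite_measure_mono) auto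

lemma Pr_cong: "(\<And>s. P s = Q s) \<Longrightarrow> Pr P = Pr Q"
  unfolding Pr_def by metis

lemma Pr_disj:
  assumes "{s. P s} \<in> sets S" "{s. Q s} \<in> sets S" "\<And>s. P s \<Longrightarrow> Q s \<Longrightarrow> False"
  shows "Pr (\<lambda>s. P s \<or> Q s) = Pr P + Pr Q"
proof -
  have "{s. P s \<or> Q s} = {s. P s} \<union> {s. Q s}" "{s. P s} \<inter> {s. Q s} = {}"
    using assms(3) by auto
  then show ?thesis
    using assms(1,2) by (simp add: Pr_def S.finite_measure_Union)
qed

lemma ennreal_Pr: "{s. P s} \<in> sets S \<Longrightarrow> ennreal (Pr P) = (\<integral>\<^sup>+s. indicator {s. P s} s \<partial>S)"
  by (simp add: Pr_def S.emeasure_eq_measure[symmetric])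

lemma nn_integral_unit_step: "(\<integral>\<^sup>+x. g (unit_step x) \<partial>N) = ennreal p * g 1 + ennreal q * g (-1)"
proof -
  have "(\<integral>\<^sup>+x. g (unit_step x) \<partial>N) =
        (\<integral>\<^sup>+x. g 1 * indicator {1} x + g (-1) * indicator (UNIV - {1}) x \<partial>N)"
    by (intro nn_integral_cong) (auto simp: unit_step_def split: split_indicator)
  also have "\<dots> = g 1 * emeasure N {1} + g (-1) * emeasure N (UNIV - {1})"
    using sets_N by (subst nn_integral_add) (auto simp: nn_integral_cmult_indicator)
  finally show ?thesis
    by (simp add: emeasure_N_up emeasure_N_down mult.commute)
qed

lemma Pr_first_step:
  assumes "{s. P s} \<in> sets S" "{s. Q 1 s} \<in> sets S" "{s. Q (-1) s} \<in> sets S"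
    and P_Cons: "\<And>x s. P (x ## s) = Q (unit_step x) s"
  shows "Pr P = p * Pr (Q 1) + q * Pr (Q (-1))"
proof -
  have "ennreal (Pr P) = (\<integral>\<^sup>+x. (\<integral>\<^sup>+s. indicator {s. P s} (x ## s) \<partial>S) \<partial>N)"
    unfolding ennreal_Pr[OF assms(1)] by (rule N.nn_integral_stream_space) (use assms(1) in simp)
  also have "\<dots> = (\<integral>\<^sup>+x. (\<lambda>y. \<integral>\<^sup>+s. indicator {s. Q y s} s \<partial>S) (unit_step x) \<partial>N)"
    by (simp add: P_Cons indicator_def)
  also have "\<dots> = ennreal p * (\<integral>\<^sup>+s. indicator {s. Q 1 s} s \<partial>S) + ennreal q * (\<integral>\<^sup>+s. indicator {s. Q (-1) s} s \<partial>S)"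
    by (rule nn_integral_unit_step)
  also have "\<dots> = ennreal p * ennreal (Pr (Q 1)) + ennreal q * ennreal (Pr (Q (-1)))"
    by (simp add: ennreal_Pr[OF assms(2)] ennreal_Pr[OF assms(3)])
  finally show ?thesis
    using p_pos q_pos Pr_nonneg
    by (simp add: ennreal_mult'[symmetric] ennreal_plus[symmetric] del: ennreal_plus)
qed

lemma nn_integral_stake_shift:
  assumes "F \<in> borel_measurable S"
  shows "(\<integral>\<^sup>+s. F s \<partial>S) = (\<integral>\<^sup>+s. \<integral>\<^sup>+t. F (stake n s @- t) \<partial>S \<partial>S)"
  using assms
proof (induction n arbitrary: F)
  case (Suc n)
  note [measurable] = Suc.prems
  have [measurable]: "(\<lambda>s. F (x ## s)) \<in> borel_measurable S" for x
    by (intro measurable_compose[OF _ Suc.prems] measurable_Stream) (auto simp: space_N)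
  have [measurable]: "(\<lambda>s. \<integral>\<^sup>+t. F (stake m s @- t) \<partial>S) \<in> borel_measurable S" for m
  proof -
    have "(\<lambda>(s,t). F (stake m s @- t)) \<in> borel_measurable (S \<Otimes>\<^sub>M S)"
      by measurable
    then show ?thesis by (rule S.borel_measurable_nn_integral)
  qed
  have "(\<integral>\<^sup>+s. F s \<partial>S) = (\<integral>\<^sup>+x. (\<integral>\<^sup>+s. F (x ## s) \<partial>S) \<partial>N)"
    by (rule N.nn_integral_stream_space) simp
  also have "\<dots> = (\<integral>\<^sup>+x. (\<integral>\<^sup>+s. \<integral>\<^sup>+t. F (x ## (stake n s @- t)) \<partial>S \<partial>S) \<partial>N)"
    by (intro nn_integral_cong Suc.IH) measurable
  also have "\<dots> = (\<integral>\<^sup>+x. (\<integral>\<^sup>+s. (\<lambda>s. \<integral>\<^sup>+t. F (stake (Suc n) s @- t) \<partial>S) (x ## s) \<partial>S) \<partial>N)"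
    by simp
  also have "\<dots> = (\<integral>\<^sup>+s. \<integral>\<^sup>+t. F (stake (Suc n) s @- t) \<partial>S \<partial>S)"
    by (rule N.nn_integral_stream_space[symmetric]) measurable
  finally show ?case .
qed (use S.emeasure_space_1 in simp)

lemma sets_Collect_sdrop: "{s. Q s} \<in> sets S \<Longrightarrow> {s. Q (sdrop n s)} \<in> sets S"
  using measurable_sets[OF measurable_sdrop, of "{s. Q s}" N n] by (simp add: vimage_def)

lemma Pr_stake_sdrop:
  assumes A: "{s. A s} \<in> sets S" and B: "{s. B s} \<in> sets S"
    and A_stake: "\<And>s t. A (stake n s @- t) = A s"
  shows "Pr (\<lambda>s. A s \<and> B (sdrop n s)) = Pr A * Pr B"
proof -
  have AB: "{s. A s \<and> B (sdrop n s)} \<in> sets S"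
    using sets.Int[OF A sets_Collect_sdrop[OF B]] by (simp add: Collect_conj_eq)
  have "ennreal (Pr (\<lambda>s. A s \<and> B (sdrop n s))) =
        (\<integral>\<^sup>+s. \<integral>\<^sup>+t. indicator {s. A s \<and> B (sdrop n s)} (stake n s @- t) \<partial>S \<partial>S)"
    unfolding ennreal_Pr[OF AB] by (rule nn_integral_stake_shift) (use AB in simp)
  also have "\<dots> = (\<integral>\<^sup>+s. indicator {s. A s} s * (\<integral>\<^sup>+t. indicator {s. B s} t \<partial>S) \<partial>S)"
    by (subst nn_integral_cmult[symmetric])
       (auto intro!: nn_integral_cong simp: A_stake sdrop_shift borel_measurable_indicator[OF B]
         split: split_indicator)
  also have "\<dots> = ennreal (Pr A) * ennreal (Pr B)"
    unfolding ennreal_Pr[OF A] ennreal_Pr[OF B] by (rule nn_integral_multc) (use A in simp)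
  finally show ?thesis
    by (simp add: Pr_nonneg ennreal_mult'[symmetric])
qed

lemma Pr_strong_markov:
  assumes F: "\<And>n. {s. F n s} \<in> sets S" and Q: "{s. Q s} \<in> sets S"
    and F_stake: "\<And>n s t. F n (stake n s @- t) = F n s"
    and F_unique: "\<And>n n' s. F n s \<Longrightarrow> F n' s \<Longrightarrow> n = n'"
  shows "Pr (\<lambda>s. \<exists>n. F n s \<and> Q (sdrop n s)) = Pr (\<lambda>s. \<exists>n. F n s) * Pr Q"
proof -
  define A where "A n = {s. F n s \<and> Q (sdrop n s)}" for n
  define B where "B n = {s. F n s}" for n
  have sets: "range A \<subseteq> sets S" "range B \<subseteq> sets S"
    using F sets.Int[OF F sets_Collect_sdrop[OF Q]] by (auto simp: A_def B_def Collect_conj_eq)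
  have disj: "disjoint_family A" "disjoint_family B"
    using F_unique by (auto simp: A_def B_def disjoint_family_on_def)
  have "(\<lambda>n. measure S (B n) * Pr Q) sums measure S (\<Union>n. A n)"
    using S.finite_measure_UNION[OF sets(1) disj(1)] Pr_stake_sdrop[OF F Q F_stake]
    by (simp add: A_def B_def Pr_def)
  moreover have "(\<lambda>n. measure S (B n) * Pr Q) sums (measure S (\<Union>n. B n) * Pr Q)"
    by (rule sums_mult2[OF S.finite_measure_UNION[OF sets(2) disj(2)]])
  ultimately have "measure S (\<Union>n. A n) = measure S (\<Union>n. B n) * Pr Q"
    using sums_unique2 by blast
  moreover have "(\<Union>n. A n) = {s. \<exists>n. F n s \<and> Q (sdrop n s)}" "(\<Union>n. B n) = {s. \<exists>n. F n s}"
    unfolding A_def B_def by auto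
  ultimately show ?thesis
    by (simp add: Pr_def)
qed

lemma nn_integral_suminf_indicator:
  assumes A: "\<And>m. {s. A m s} \<in> sets S" and w: "\<And>m. 0 \<le> w m"
    and sums: "(\<lambda>m. w m * Pr (A m)) sums L"
  shows "(\<integral>\<^sup>+s. (\<Sum>m. ennreal (w m) * indicator {s. A m s} s) \<partial>S) = ennreal L"
proof -
  have "(\<integral>\<^sup>+s. (\<Sum>m. ennreal (w m) * indicator {s. A m s} s) \<partial>S) =
      (\<Sum>m. \<integral>\<^sup>+s. ennreal (w m) * indicator {s. A m s} s \<partial>S)"
  proof (rule nn_integral_suminf)
    fix m
    show "(\<lambda>s. ennreal (w m) * indicator {s. A m s} s) \<in> borel_measurable S"
      using A[of m] by measurable
  qed
  also have "\<dots> = (\<Sum>m. ennreal (w m * Pr (A m)))"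
  proof (rule suminf_cong)
    fix m
    have "(\<integral>\<^sup>+s. ennreal (w m) * indicator {s. A m s} s \<partial>S) = ennreal (w m) * ennreal (Pr (A m))"
      by (simp add: nn_integral_cmult_indicator[OF A] Pr_def S.emeasure_eq_measure)
    then show "(\<integral>\<^sup>+s. ennreal (w m) * indicator {s. A m s} s \<partial>S) = ennreal (w m * Pr (A m))"
      using w Pr_nonneg by (simp add: ennreal_mult)
  qed
  also have "\<dots> = ennreal (\<Sum>m. w m * Pr (A m))"
    by (rule suminf_ennreal2) (use w Pr_nonneg sums_summable[OF sums] in auto)
  also have "\<dots> = ennreal L"
    using sums_unique[OF sums] by simp
  finally show ?thesis .
qed

end

section \<open>Gambler's ruin\<close>

definition hits_avoiding :: "int \<Rightarrow> int \<Rightarrow> int \<Rightarrow> int stream \<Rightarrow> bool" where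
  "hits_avoiding c d y s \<longleftrightarrow>
     (\<exists>m. y + stream_walk s m = d \<and> (\<forall>k<m. y + stream_walk s k \<noteq> c \<and> y + stream_walk s k \<noteq> d))"

lemma pred_hits_avoiding [measurable]:
  "Measurable.pred (stream_space (count_space UNIV)) (hits_avoiding c d y)"
  unfolding hits_avoiding_def by measurable

lemma hits_avoiding_target [simp]: "hits_avoiding c d d s"
  unfolding hits_avoiding_def by (auto intro!: exI[of _ 0])

lemma not_hits_avoiding_start [simp]: "c \<noteq> d \<Longrightarrow> \<not> hits_avoiding c d c s"
  unfolding hits_avoiding_def by (metis stream_walk_0 add_0_right neq0_conv)

lemma hits_avoiding_Cons:
  assumes "y \<noteq> c" "y \<noteq> d"
  shows "hits_avoiding c d y (x ## s) \<longleftrightarrow> hits_avoiding c d (y + unit_step x) s"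
proof
  assume "hits_avoiding c d y (x ## s)"
  then obtain m where m: "y + stream_walk (x ## s) m = d"
    "\<forall>k<m. y + stream_walk (x ## s) k \<noteq> c \<and> y + stream_walk (x ## s) k \<noteq> d"
    unfolding hits_avoiding_def by blast
  then obtain m' where "m = Suc m'"
    using assms by (cases m) auto
  with m show "hits_avoiding c d (y + unit_step x) s"
    unfolding hits_avoiding_def by (intro exI[of _ m']) (auto simp: algebra_simps)
next
  assume "hits_avoiding c d (y + unit_step x) s"
  then obtain m where m: "y + unit_step x + stream_walk s m = d"
    "\<forall>k<m. y + unit_step x + stream_walk s k \<noteq> c \<and> y + unit_step x + stream_walk s k \<noteq> d"
    unfolding hits_avoiding_def by blast
  have "\<forall>k<Suc m. y + stream_walk (x ## s) k \<noteq> c \<and> y + stream_walk (x ## s) k \<noteq> d"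
  proof (intro allI impI)
    fix k assume "k < Suc m"
    then show "y + stream_walk (x ## s) k \<noteq> c \<and> y + stream_walk (x ## s) k \<noteq> d"
      using m assms by (cases k) (auto simp: algebra_simps)
  qed
  moreover have "y + stream_walk (x ## s) (Suc m) = d"
    using m by (simp add: algebra_simps)
  ultimately show "hits_avoiding c d y (x ## s)"
    unfolding hits_avoiding_def by blast
qed

text \<open>The increments of a solution of \<open>f y = p f (y + 1) + q f (y - 1)\<close> form a geometric
  progression with ratio \<open>h = q / p\<close>.\<close>

lemma biased_harmonic_closed_form:
  fixes f :: "int \<Rightarrow> real" and p q h :: real
  assumes pq: "p + q = 1" and p: "p > 0" and h: "h = q / p" and h0: "0 < h" and h1: "h < 1"
    and harmonic: "\<And>y. c < y \<Longrightarrow> y < d \<Longrightarrow> f y = p * f (y + 1) + q * f (y - 1)"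
    and cd: "c < d" and y: "c \<le> y" "y \<le> d"
  shows "f y = f c + (f d - f c) * (1 - h ^ nat (y - c)) / (1 - h ^ nat (d - c))"
proof -
  define D where "D = nat (d - c)"
  define g where "g j = f (c + int j)" for j
  define \<Delta> where "\<Delta> j = g (Suc j) - g j" for j
  have D: "D > 0" "d = c + int D"
    using cd by (auto simp: D_def)
  have \<Delta>_Suc: "\<Delta> (Suc i) = h * \<Delta> i" if "Suc i < D" for i
  proof -
    have "g (Suc i) = p * g (Suc (Suc i)) + q * g i"
      using harmonic[of "c + int (Suc i)"] that D unfolding g_def by (auto simp: algebra_simps)
    then have "(p + q) * g (Suc i) = p * g (Suc (Suc i)) + q * g i"
      using pq by simp
    then have "p * (g (Suc (Suc i)) - g (Suc i)) = q * (g (Suc i) - g i)"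
      by (simp add: algebra_simps)
    then show ?thesis
      using p by (simp add: \<Delta>_def h field_simps)
  qed
  have \<Delta>_pow: "\<Delta> j = h ^ j * \<Delta> 0" if "j < D" for j
    using that by (induction j) (simp_all add: \<Delta>_Suc)
  have g_sum: "g j = g 0 + \<Delta> 0 * (1 - h ^ j) / (1 - h)" if "j \<le> D" for j
  proof -
    have "g j = g 0 + \<Delta> 0 * (\<Sum>i<j. h ^ i)"
      using that
    proof (induction j)
      case (Suc j)
      then show ?case using \<Delta>_pow[of j] by (simp add: \<Delta>_def algebra_simps)
    qed simp
    then show ?thesis
      using h1 by (simp add: sum_gp_strict)
  qed
  have hD: "h ^ D < 1"
    using D h0 h1 by (simp add: power_less_one_iff)
  have \<Delta>0: "\<Delta> 0 = (f d - f c) * (1 - h) / (1 - h ^ D)"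
    using g_sum[of D] D hD h1 by (simp add: g_def divide_simps) (simp add: algebra_simps)
  have "f y = g (nat (y - c))"
    using y by (simp add: g_def)
  also have "\<dots> = f c + \<Delta> 0 * (1 - h ^ nat (y - c)) / (1 - h)"
    using g_sum[of "nat (y - c)"] y cd by (simp add: D_def g_def)
  finally show ?thesis
    using h1 by (simp add: \<Delta>0 D_def)
qed

context pm_walk
begin

lemma sets_hits_avoiding [measurable]: "{s. hits_avoiding c d y s} \<in> sets S"
  by (rule sets_S_Collect) measurable

lemma Pr_hits_avoiding_first_step:
  assumes "y \<noteq> c" "y \<noteq> d"
  shows "Pr (hits_avoiding c d y) = p * Pr (hits_avoiding c d (y + 1)) + q * Pr (hits_avoiding c d (y - 1))"
  using Pr_first_step[where Q="\<lambda>x. hits_avoiding c d (y + x)"] assms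
  by (simp add: hits_avoiding_Cons)

lemma Pr_hits_avoiding_upper:
  assumes "c < d" "c \<le> y" "y \<le> d"
  shows "Pr (hits_avoiding c d y) = (1 - h ^ nat (y - c)) / (1 - h ^ nat (d - c))"
proof -
  have "Pr (hits_avoiding c d y) = Pr (hits_avoiding c d c) +
     (Pr (hits_avoiding c d d) - Pr (hits_avoiding c d c)) * (1 - h ^ nat (y - c)) / (1 - h ^ nat (d - c))"
    by (rule biased_harmonic_closed_form[OF p_plus_q p_pos h_def h_pos h_less_1
          Pr_hits_avoiding_first_step]) (use assms in auto)
  also have "Pr (hits_avoiding c d c) = 0"
    using assms by (simp add: Pr_def)
  also have "Pr (hits_avoiding c d d) = 1"
    by (simp add: Pr_def)
  finally show ?thesis
    by simp
qed

lemma Pr_hits_avoiding_lower: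
  assumes "c < d" "c \<le> y" "y \<le> d"
  shows "Pr (hits_avoiding d c y) = 1 - (1 - h ^ nat (y - c)) / (1 - h ^ nat (d - c))"
proof -
  have "Pr (hits_avoiding d c y) = Pr (hits_avoiding d c c) +
     (Pr (hits_avoiding d c d) - Pr (hits_avoiding d c c)) * (1 - h ^ nat (y - c)) / (1 - h ^ nat (d - c))"
    by (rule biased_harmonic_closed_form[OF p_plus_q p_pos h_def h_pos h_less_1
          Pr_hits_avoiding_first_step]) (use assms in auto)
  also have "Pr (hits_avoiding d c d) = 0"
    using assms by (simp add: Pr_def)
  also have "Pr (hits_avoiding d c c) = 1"
    by (simp add: Pr_def)
  finally show ?thesis
    by (simp add: minus_divide_left)
qed

lemma Pr_hits_avoiding_from_below:
  assumes "y < d" "d < c"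
  shows "Pr (hits_avoiding c d y) = 1" "Pr (hits_avoiding d c y) = 0"
proof -
  have "\<not> hits_avoiding d c y s" for s
  proof
    assume "hits_avoiding d c y s"
    then obtain m where m: "y + stream_walk s m = c" "\<forall>k<m. y + stream_walk s k \<noteq> d"
      unfolding hits_avoiding_def by blast
    then show False
      using stream_walk_below_until_hit(2)[OF assms(1) m(2)] assms(2) by simp
  qed
  then show "Pr (hits_avoiding d c y) = 0"
    by (simp add: Pr_def)
  define a where "a n = y - 1 - int n" for n
  have le: "Pr (hits_avoiding (a n) d y) \<le> Pr (hits_avoiding c d y)" for n
  proof (rule Pr_mono[OF sets_hits_avoiding])
    fix s assume "hits_avoiding (a n) d y s"
    then obtain m where m: "y + stream_walk s m = d"
      "\<forall>k<m. y + stream_walk s k \<noteq> a n \<and> y + stream_walk s k \<noteq> d"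
      unfolding hits_avoiding_def by blast
    then have "\<forall>k<m. y + stream_walk s k < d"
      using stream_walk_below_until_hit(1)[OF assms(1)] by blast
    then show "hits_avoiding c d y s"
      unfolding hits_avoiding_def using m assms by (intro exI[of _ m]) force
  qed
  have Pr_a: "Pr (hits_avoiding (a n) d y) = (1 - h * h ^ n) / (1 - h ^ nat (d - y) * (h * h ^ n))" for n
  proof -
    have "nat (y - a n) = Suc n" "nat (d - a n) = nat (d - y) + Suc n"
      using assms by (auto simp: a_def)
    then show ?thesis
      using assms by (subst Pr_hits_avoiding_upper) (auto simp: a_def power_add)
  qed
  have "(\<lambda>n. Pr (hits_avoiding (a n) d y)) \<longlonglongrightarrow> (1 - h * 0) / (1 - h ^ nat (d - y) * (h * 0))"
    unfolding Pr_a by (intro tendsto_intros LIMSEQ_realpow_zero) (use h_pos h_less_1 in auto)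
  then have "1 \<le> Pr (hits_avoiding c d y)"
    using le by (intro LIMSEQ_le_const2) auto
  then show "Pr (hits_avoiding c d y) = 1"
    using Pr_le_1 by (intro antisym)
qed

lemma Pr_hits_avoiding_from_above:
  assumes "c < d" "d < y"
  shows "Pr (hits_avoiding c d y) = h ^ nat (y - d)" "Pr (hits_avoiding d c y) = 0"
proof -
  have "\<not> hits_avoiding d c y s" for s
  proof
    assume "hits_avoiding d c y s"
    then obtain m where m: "y + stream_walk s m = c" "\<forall>k<m. y + stream_walk s k \<noteq> d"
      unfolding hits_avoiding_def by blast
    then show False
      using stream_walk_above_until_hit(2)[OF assms(2) m(2)] assms(1) by simp
  qed
  then show "Pr (hits_avoiding d c y) = 0"
    by (simp add: Pr_def)
  define A where "A n = {s. hits_avoiding (y + 1 + int n) d y s}" for n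
  have "incseq A"
  proof (rule incseq_SucI, safe)
    fix n s assume "s \<in> A n"
    then obtain m where m: "y + stream_walk s m = d"
      "\<forall>k<m. y + stream_walk s k \<noteq> y + 1 + int n \<and> y + stream_walk s k \<noteq> d"
      unfolding hits_avoiding_def A_def by blast
    then have "\<forall>k<m. y + stream_walk s k < y + 1 + int n"
      using stream_walk_below_until_hit(1)[of y "y + 1 + int n" m s] by auto
    then show "s \<in> A (Suc n)"
      unfolding A_def hits_avoiding_def using m by (intro CollectI exI[of _ m]) force
  qed
  moreover have "(\<Union>n. A n) = {s. hits_avoiding c d y s}"
  proof safe
    fix n s assume "s \<in> A n"
    then obtain m where m: "y + stream_walk s m = d"
      "\<forall>k<m. y + stream_walk s k \<noteq> y + 1 + int n \<and> y + stream_walk s k \<noteq> d"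
      unfolding hits_avoiding_def A_def by blast
    then have "\<forall>k<m. d < y + stream_walk s k"
      using stream_walk_above_until_hit(1)[OF assms(2)] by blast
    then show "hits_avoiding c d y s"
      unfolding hits_avoiding_def using m assms by (intro exI[of _ m]) force
  next
    fix s assume "hits_avoiding c d y s"
    then obtain m where m: "y + stream_walk s m = d"
      "\<forall>k<m. y + stream_walk s k \<noteq> c \<and> y + stream_walk s k \<noteq> d"
      unfolding hits_avoiding_def by blast
    moreover have "\<forall>k<m. y + stream_walk s k \<noteq> y + 1 + int m"
    proof (intro allI impI)
      fix k assume "k < m"
      then show "y + stream_walk s k \<noteq> y + 1 + int m"
        using abs_stream_walk_le[of s k] by auto
    qed
    ultimately have "s \<in> A m"
      unfolding A_def hits_avoiding_def by blast
    then show "s \<in> (\<Union>n. A n)"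
      by blast
  qed
  moreover have "range A \<subseteq> sets S"
    unfolding A_def by auto
  ultimately have "(\<lambda>n. measure S (A n)) \<longlonglongrightarrow> Pr (hits_avoiding c d y)"
    using S.finite_Lim_measure_incseq[of A] by (simp add: Pr_def)
  moreover have "measure S (A n) =
      1 - (1 - h ^ nat (y - d)) / (1 - h ^ nat (y - d) * (h * h ^ n))" for n
  proof -
    have "nat (y + 1 + int n - d) = nat (y - d) + Suc n"
      using assms by auto
    then show ?thesis
      using assms unfolding A_def Pr_def[symmetric]
      by (subst Pr_hits_avoiding_lower) (auto simp: power_add)
  qed
  ultimately have "(\<lambda>n. 1 - (1 - h ^ nat (y - d)) / (1 - h ^ nat (y - d) * (h * h ^ n)))
      \<longlonglongrightarrow> Pr (hits_avoiding c d y)"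
    by simp
  moreover have "(\<lambda>n. 1 - (1 - h ^ nat (y - d)) / (1 - h ^ nat (y - d) * (h * h ^ n)))
      \<longlonglongrightarrow> 1 - (1 - h ^ nat (y - d)) / (1 - h ^ nat (y - d) * (h * 0))"
    by (intro tendsto_intros LIMSEQ_realpow_zero) (use h_pos h_less_1 in auto)
  ultimately have "Pr (hits_avoiding c d y) = 1 - (1 - h ^ nat (y - d)) / (1 - h ^ nat (y - d) * (h * 0))"
    using LIMSEQ_unique by metis
  then show "Pr (hits_avoiding c d y) = h ^ nat (y - d)"
    by simp
qed

end

section \<open>Visits to \<open>0\<close> and \<open>c\<close>\<close>

definition visits :: "int \<Rightarrow> int \<Rightarrow> int stream \<Rightarrow> nat set" where
  "visits x y s = {k. 1 \<le> k \<and> y + stream_walk s k = x}"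

definition visits_pair :: "int \<Rightarrow> int \<Rightarrow> int stream \<Rightarrow> nat set" where
  "visits_pair c y s = {k. 1 \<le> k \<and> (y + stream_walk s k = 0 \<or> y + stream_walk s k = c)}"

definition first_visit :: "int \<Rightarrow> int \<Rightarrow> int stream \<Rightarrow> nat \<Rightarrow> int \<Rightarrow> bool" where
  "first_visit c y s n b \<longleftrightarrow> 1 \<le> n \<and> y + stream_walk s n = b \<and> (b = 0 \<or> b = c) \<and>
     (\<forall>k. 1 \<le> k \<and> k < n \<longrightarrow> y + stream_walk s k \<noteq> 0 \<and> y + stream_walk s k \<noteq> c)"

definition visit_counts :: "int \<Rightarrow> int \<Rightarrow> nat \<Rightarrow> nat \<Rightarrow> int stream \<Rightarrow> bool" where
  "visit_counts c y j m s \<longleftrightarrow>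
     finite (visits 0 y s) \<and> card (visits 0 y s) = j \<and> finite (visits c y s) \<and> card (visits c y s) = m"

definition total_visits :: "int \<Rightarrow> int \<Rightarrow> nat \<Rightarrow> int stream \<Rightarrow> bool" where
  "total_visits c y k s \<longleftrightarrow> finite (visits_pair c y s) \<and> card (visits_pair c y s) = k"

definition escapes :: "int \<Rightarrow> int \<Rightarrow> int stream \<Rightarrow> bool" where
  "escapes c y s \<longleftrightarrow> visits_pair c y s = {}"

definition avoids :: "int \<Rightarrow> int \<Rightarrow> int stream \<Rightarrow> bool" where
  "avoids c y s \<longleftrightarrow> (\<forall>m. y + stream_walk s m \<noteq> 0 \<and> y + stream_walk s m \<noteq> c)"

lemma visits_pair_eq: "visits_pair c y s = visits 0 y s \<union> visits c y s"
  by (auto simp: visits_pair_def visits_def)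

lemma visits_disjoint: "c \<noteq> 0 \<Longrightarrow> visits 0 y s \<inter> visits c y s = {}"
  by (auto simp: visits_def)

lemma pred_first_visit [measurable]:
  "Measurable.pred (stream_space (count_space UNIV)) (\<lambda>s. first_visit c y s n b)"
  unfolding first_visit_def by measurable

lemma pred_visit_counts [measurable]:
  "Measurable.pred (stream_space (count_space UNIV)) (visit_counts c y j m)"
  unfolding visit_counts_def visits_def by (intro pred_intros_logic pred_finite_card_eq) measurable

lemma pred_total_visits [measurable]:
  "Measurable.pred (stream_space (count_space UNIV)) (total_visits c y k)"
  unfolding total_visits_def visits_pair_def by (rule pred_finite_card_eq) measurable

lemma pred_escapes [measurable]:
  "Measurable.pred (stream_space (count_space UNIV)) (escapes c y)"
proof -
  have "escapes c y = (\<lambda>s. \<forall>k. \<not> (1 \<le> k \<and> (y + stream_walk s k = 0 \<or> y + stream_walk s k = c)))"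
    by (auto simp: escapes_def visits_pair_def fun_eq_iff)
  also have "Measurable.pred (stream_space (count_space UNIV)) \<dots>"
    by measurable
  finally show ?thesis .
qed

lemma pred_avoids [measurable]: "Measurable.pred (stream_space (count_space UNIV)) (avoids c y)"
  unfolding avoids_def by measurable

lemma first_visit_stake_shift: "first_visit c y (stake n s @- t) n b = first_visit c y s n b"
  unfolding first_visit_def by (auto simp: stream_walk_shift_stake)

lemma first_visit_unique: "first_visit c y s n b \<Longrightarrow> first_visit c y s n' b' \<Longrightarrow> n = n' \<and> b = b'"
  unfolding first_visit_def by (metis linorder_neqE_nat)

lemma first_visit_exists: "visits_pair c y s \<noteq> {} \<Longrightarrow> \<exists>n b. first_visit c y s n b"
proof -
  assume "visits_pair c y s \<noteq> {}"
  then have "(LEAST k. k \<in> visits_pair c y s) \<in> visits_pair c y s"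
    by (metis LeastI ex_in_conv)
  then have "first_visit c y s (LEAST k. k \<in> visits_pair c y s) (y + stream_walk s (LEAST k. k \<in> visits_pair c y s))"
    unfolding first_visit_def visits_pair_def by (auto dest: not_less_Least)
  then show ?thesis
    by blast
qed

lemma first_visit_not_escapes: "first_visit c y s n b \<Longrightarrow> \<not> escapes c y s"
  unfolding first_visit_def escapes_def visits_pair_def by auto


lemma visits_first_visit_decomp:
  assumes "first_visit c y s n b" "x = 0 \<or> x = c"
  shows "visits x y s = (if b = x then {n} else {}) \<union> (\<lambda>k. k + n) ` visits x b (sdrop n s)"
proof -
  have fv: "1 \<le> n" "y + stream_walk s n = b"
    "\<forall>k. 1 \<le> k \<and> k < n \<longrightarrow> y + stream_walk s k \<noteq> 0 \<and> y + stream_walk s k \<noteq> c"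
    using assms(1) unfolding first_visit_def by auto
  have after: "y + stream_walk s k = b + stream_walk (sdrop n s) (k - n)" if "n \<le> k" for k
    using that fv(2) by (simp add: stream_walk_sdrop)
  show ?thesis
  proof (intro set_eqI iffI)
    fix k assume k: "k \<in> visits x y s"
    then have "1 \<le> k" "y + stream_walk s k = x" "n \<le> k"
      using fv(3) assms(2) by (auto simp: visits_def not_less[symmetric])
    moreover have "k = (k - n) + n"
      using \<open>n \<le> k\<close> by simp
    ultimately show "k \<in> (if b = x then {n} else {}) \<union> (\<lambda>k. k + n) ` visits x b (sdrop n s)"
      using after[of k] fv(2) unfolding visits_def
      by (cases "k = n") (auto intro!: image_eqI[of k _ "k - n"])
  next
    fix k assume "k \<in> (if b = x then {n} else {}) \<union> (\<lambda>k. k + n) ` visits x b (sdrop n s)"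
    then show "k \<in> visits x y s"
      using fv(1,2) after[of k] by (auto simp: visits_def split: if_splits)
  qed
qed

lemma
  assumes "first_visit c y s n b" "x = 0 \<or> x = c"
  shows finite_visits_first_visit: "finite (visits x y s) \<longleftrightarrow> finite (visits x b (sdrop n s))"
    and card_visits_first_visit: "finite (visits x y s) \<Longrightarrow>
      card (visits x y s) = (if b = x then 1 else 0) + card (visits x b (sdrop n s))"
proof -
  have "n \<notin> (\<lambda>k. k + n) ` visits x b (sdrop n s)"
    by (auto simp: visits_def)
  moreover have "inj (\<lambda>k::nat. k + n)"
    by (simp add: inj_on_def)
  ultimately show "finite (visits x y s) \<longleftrightarrow> finite (visits x b (sdrop n s))"
    and "finite (visits x y s) \<Longrightarrow>
      card (visits x y s) = (if b = x then 1 else 0) + card (visits x b (sdrop n s))"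
    unfolding visits_first_visit_decomp[OF assms]
    by (auto simp: finite_image_iff card_image inj_on_subset card_insert_if)
qed

lemma visit_counts_first_visit_decomp:
  assumes "c \<noteq> 0"
  shows "visit_counts c y j m s \<longleftrightarrow>
    (escapes c y s \<and> j = 0 \<and> m = 0) \<or>
    (\<exists>n. first_visit c y s n 0 \<and> 0 < j \<and> visit_counts c 0 (j - 1) m (sdrop n s)) \<or>
    (\<exists>n. first_visit c y s n c \<and> 0 < m \<and> visit_counts c c j (m - 1) (sdrop n s))"
proof (cases "escapes c y s")
  case True
  then show ?thesis
    using first_visit_not_escapes by (auto simp: visit_counts_def escapes_def visits_pair_eq)
next
  case False
  then obtain n b where fv: "first_visit c y s n b"
    using first_visit_exists unfolding escapes_def by blast
  then have "b = 0 \<or> b = c"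
    by (auto simp: first_visit_def)
  moreover have "first_visit c y s n' b' \<longleftrightarrow> n' = n \<and> b' = b" for n' b'
    using first_visit_unique fv by blast
  ultimately show ?thesis
    using False assms finite_visits_first_visit[OF fv] card_visits_first_visit[OF fv]
    by (auto simp: visit_counts_def)
qed

lemma total_visits_iff:
  assumes "c \<noteq> 0"
  shows "total_visits c y k s \<longleftrightarrow> (\<exists>j\<le>k. visit_counts c y j (k - j) s)"
  unfolding total_visits_def visit_counts_def visits_pair_eq
  using card_Un_disjoint[OF _ _ visits_disjoint[OF assms]]
  by (auto intro!: exI[of _ "card (visits 0 y s)"])

lemma first_visit_Cons:
  assumes "b = 0 \<or> b = c" "b' = (if b = 0 then c else 0)" "c \<noteq> 0"
  shows "(\<exists>n. first_visit c y (x ## s) n b) \<longleftrightarrow> hits_avoiding b' b (y + unit_step x) s"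
proof
  assume "\<exists>n. first_visit c y (x ## s) n b"
  then obtain n where fv: "first_visit c y (x ## s) n b"
    by blast
  then obtain m where n: "n = Suc m"
    unfolding first_visit_def by (cases n) auto
  have "y + unit_step x + stream_walk s m = b"
    using fv n by (simp add: first_visit_def algebra_simps)
  moreover have "\<forall>k<m. y + unit_step x + stream_walk s k \<noteq> b' \<and> y + unit_step x + stream_walk s k \<noteq> b"
  proof (intro allI impI)
    fix k assume "k < m"
    then have "y + stream_walk (x ## s) (Suc k) \<noteq> 0 \<and> y + stream_walk (x ## s) (Suc k) \<noteq> c"
      using fv n unfolding first_visit_def by auto
    then show "y + unit_step x + stream_walk s k \<noteq> b' \<and> y + unit_step x + stream_walk s k \<noteq> b"
      using assms by (auto simp: algebra_simps)
  qed
  ultimately show "hits_avoiding b' b (y + unit_step x) s"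
    unfolding hits_avoiding_def by blast
next
  assume "hits_avoiding b' b (y + unit_step x) s"
  then obtain m where m: "y + unit_step x + stream_walk s m = b"
    "\<forall>k<m. y + unit_step x + stream_walk s k \<noteq> b' \<and> y + unit_step x + stream_walk s k \<noteq> b"
    unfolding hits_avoiding_def by blast
  have "\<forall>k. 1 \<le> k \<and> k < Suc m \<longrightarrow> y + stream_walk (x ## s) k \<noteq> 0 \<and> y + stream_walk (x ## s) k \<noteq> c"
  proof (intro allI impI)
    fix k assume "1 \<le> k \<and> k < Suc m"
    then obtain k' where "k = Suc k'" "k' < m"
      by (cases k) auto
    then show "y + stream_walk (x ## s) k \<noteq> 0 \<and> y + stream_walk (x ## s) k \<noteq> c"
      using m assms by (auto simp: algebra_simps)
  qed
  then have "first_visit c y (x ## s) (Suc m) b"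
    unfolding first_visit_def using m assms by (auto simp: algebra_simps)
  then show "\<exists>n. first_visit c y (x ## s) n b"
    by blast
qed

lemma escapes_Cons: "escapes c y (x ## s) \<longleftrightarrow> avoids c (y + unit_step x) s"
proof -
  have "escapes c y (x ## s) \<longleftrightarrow>
      (\<forall>k. 1 \<le> k \<longrightarrow> y + stream_walk (x ## s) k \<noteq> 0 \<and> y + stream_walk (x ## s) k \<noteq> c)"
    by (auto simp: escapes_def visits_pair_def)
  also have "\<dots> \<longleftrightarrow> (\<forall>m. y + stream_walk (x ## s) (Suc m) \<noteq> 0 \<and> y + stream_walk (x ## s) (Suc m) \<noteq> c)"
  proof (intro iffI allI impI)
    fix k :: nat
    assume "\<forall>m. y + stream_walk (x ## s) (Suc m) \<noteq> 0 \<and> y + stream_walk (x ## s) (Suc m) \<noteq> c" "1 \<le> k"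
    then show "y + stream_walk (x ## s) k \<noteq> 0 \<and> y + stream_walk (x ## s) k \<noteq> c"
      by (cases k) auto
  qed auto
  also have "\<dots> \<longleftrightarrow> avoids c (y + unit_step x) s"
    by (simp add: avoids_def algebra_simps)
  finally show ?thesis .
qed

lemma avoids_or_hits:
  "avoids c y s \<or> hits_avoiding c 0 y s \<or> hits_avoiding 0 c y s"
proof (cases "avoids c y s")
  case False
  then have ex: "\<exists>m. y + stream_walk s m = 0 \<or> y + stream_walk s m = c"
    unfolding avoids_def by blast
  define n where "n = (LEAST m. y + stream_walk s m = 0 \<or> y + stream_walk s m = c)"
  have "y + stream_walk s n = 0 \<or> y + stream_walk s n = c"
    unfolding n_def by (rule LeastI_ex[OF ex])
  moreover have "\<forall>k<n. y + stream_walk s k \<noteq> 0 \<and> y + stream_walk s k \<noteq> c"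
    unfolding n_def using not_less_Least by blast
  ultimately show ?thesis
    unfolding hits_avoiding_def by blast
qed simp

lemma avoids_hits_exclusive:
  assumes "c \<noteq> 0"
  shows "\<not> (avoids c y s \<and> hits_avoiding c 0 y s)" "\<not> (avoids c y s \<and> hits_avoiding 0 c y s)"
    and "\<not> (hits_avoiding c 0 y s \<and> hits_avoiding 0 c y s)"
  using assms unfolding avoids_def hits_avoiding_def by (blast, blast, metis linorder_neqE_nat)

section \<open>Linear recursions and generating functions\<close>

lemma linear_recursion_convolution:
  fixes x b :: "nat \<Rightarrow> real"
  assumes rec: "\<And>m. x m = b m + (if 0 < m then a * x (m - 1) else 0)"
  shows "x m = (\<Sum>i\<le>m. a ^ i * b (m - i))"
proof (induction m)
  case 0
  then show ?case
    using rec[of 0] by simp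
next
  case (Suc m)
  have "x (Suc m) = b (Suc m) + a * x m"
    using rec[of "Suc m"] by simp
  also have "\<dots> = b (Suc m) + (\<Sum>i\<le>m. a ^ Suc i * b (m - i))"
    by (simp add: Suc sum_distrib_left mult.assoc)
  also have "\<dots> = (\<Sum>i\<le>Suc m. a ^ i * b (Suc m - i))"
    by (subst sum.atMost_Suc_shift) simp
  finally show ?case .
qed

text \<open>The generating function of a solution is that of \<open>b\<close> times the geometric series of \<open>a w\<close>
  (Cauchy product).\<close>

lemma linear_recursion_sums:
  fixes x b :: "nat \<Rightarrow> real"
  assumes rec: "\<And>m. x m = b m + (if 0 < m then a * x (m - 1) else 0)"
    and a: "0 \<le> a" and w: "0 \<le> w" and aw: "a * w < 1"
    and b_nonneg: "\<And>m. 0 \<le> b m" and b_sums: "(\<lambda>m. w ^ m * b m) sums B"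
  shows "(\<lambda>m. w ^ m * x m) sums (B / (1 - a * w))"
proof -
  have product: "w ^ m * x m = (\<Sum>i\<le>m. (a * w) ^ i * (w ^ (m - i) * b (m - i)))" for m
  proof -
    have "w ^ m * x m = (\<Sum>i\<le>m. w ^ m * (a ^ i * b (m - i)))"
      by (simp add: linear_recursion_convolution[OF rec] sum_distrib_left)
    also have "\<dots> = (\<Sum>i\<le>m. (a * w) ^ i * (w ^ (m - i) * b (m - i)))"
    proof (rule sum.cong)
      fix i assume "i \<in> {..m}"
      then have "w ^ m = w ^ i * w ^ (m - i)"
        by (simp flip: power_add)
      then show "w ^ m * (a ^ i * b (m - i)) = (a * w) ^ i * (w ^ (m - i) * b (m - i))"
        by (simp add: power_mult_distrib)
    qed simp
    finally show ?thesis .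
  qed
  have "0 \<le> a * w"
    using a w by simp
  then have "summable (\<lambda>k. norm ((a * w) ^ k))" "(\<Sum>k. (a * w) ^ k) = 1 / (1 - a * w)"
    using aw by (simp_all add: summable_geometric suminf_geometric)
  moreover have "summable (\<lambda>k. norm (w ^ k * b k))"
    using b_sums b_nonneg w by (simp add: sums_summable)
  ultimately have "(\<lambda>k. \<Sum>i\<le>k. (a * w) ^ i * (w ^ (k - i) * b (k - i))) sums (1 / (1 - a * w) * B)"
    using Cauchy_product_sums[of "\<lambda>k. (a * w) ^ k" "\<lambda>k. w ^ k * b k"] sums_unique[OF b_sums] by simp
  then show ?thesis
    by (simp add: product[symmetric])
qed

text \<open>Abstract form of the first-visit decomposition: \<open>P0 j m\<close> (\<open>Pc j m\<close>) is the probability of exactly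
  \<open>j\<close> visits to \<open>0\<close> and \<open>m\<close> visits to \<open>c\<close> for the walk started at \<open>0\<close> (at \<open>c\<close>), \<open>e0\<close>, \<open>ec\<close> are the
  escape probabilities and \<open>rxy\<close> is the probability that the first visit from \<open>x\<close> is to \<open>y\<close>.\<close>

locale visit_recursion =
  fixes P0 Pc :: "nat \<Rightarrow> nat \<Rightarrow> real" and e0 ec r00 r0c rc0 rcc :: real
  assumes P0_rec: "\<And>j m. P0 j m = (if j = 0 \<and> m = 0 then e0 else 0)
      + (if 0 < j then r00 * P0 (j - 1) m else 0) + (if 0 < m then r0c * Pc j (m - 1) else 0)"
    and Pc_rec: "\<And>j m. Pc j m = (if j = 0 \<and> m = 0 then ec else 0)
      + (if 0 < j then rc0 * P0 (j - 1) m else 0) + (if 0 < m then rcc * Pc j (m - 1) else 0)"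
begin

definition escape_or_0_first :: "real \<Rightarrow> real \<Rightarrow> nat \<Rightarrow> nat \<Rightarrow> real" where
  "escape_or_0_first e r j m = (if j = 0 \<and> m = 0 then e else 0) + (if 0 < j then r * P0 (j - 1) m else 0)"

lemma sums_escape_or_0_first_0: "(\<lambda>m. w ^ m * escape_or_0_first e r 0 m) sums e"
proof -
  have "(\<lambda>m. w ^ m * escape_or_0_first e r 0 m) = (\<lambda>m. if m = 0 then e else 0)"
    by (auto simp: escape_or_0_first_def)
  then show ?thesis
    using sums_single[of 0 "\<lambda>_. e"] by simp
qed

lemma sums_escape_or_0_first_Suc:
  "(\<lambda>m. w ^ m * P0 j m) sums F \<Longrightarrow> (\<lambda>m. w ^ m * escape_or_0_first e r (Suc j) m) sums (r * F)"
  using sums_mult[of _ F r] by (simp add: escape_or_0_first_def algebra_simps)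

lemma gf_P0_sums:
  assumes P0_nonneg: "\<And>j m. 0 \<le> P0 j m"
    and "0 \<le> ec" "0 \<le> rc0" "0 \<le> rcc" "0 < w" "rcc * w < 1"
  shows "(\<lambda>m. w ^ m * P0 j m) sums
    ((e0 + r0c * w * ec / (1 - rcc * w)) * (r00 + r0c * w * rc0 / (1 - rcc * w)) ^ j)"
    (is "_ sums ?F j")
proof -
  have step: "(\<lambda>m. w ^ m * P0 j m) sums (A + r0c * w * (B / (1 - rcc * w)))"
    if A: "(\<lambda>m. w ^ m * escape_or_0_first e0 r00 j m) sums A"
      and B: "(\<lambda>m. w ^ m * escape_or_0_first ec rc0 j m) sums B" for j A B
  proof -
    have "(\<lambda>m. w ^ m * Pc j m) sums (B / (1 - rcc * w))"
      by (rule linear_recursion_sums[OF _ _ _ _ _ B])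
         (use assms P0_nonneg[of "j - 1"] in \<open>auto simp: Pc_rec escape_or_0_first_def\<close>)
    from sums_mult[OF this, of "r0c * w"]
    have "(\<lambda>m. (\<lambda>m. w ^ m * (if 0 < m then r0c * Pc j (m - 1) else 0)) (Suc m))
        sums (r0c * w * (B / (1 - rcc * w)))"
      by (simp add: algebra_simps)
    then have "(\<lambda>m. w ^ m * (if 0 < m then r0c * Pc j (m - 1) else 0)) sums (r0c * w * (B / (1 - rcc * w)))"
      by (subst (asm) sums_Suc_iff) simp
    from sums_add[OF A this] show ?thesis
      by (simp add: P0_rec[of j] escape_or_0_first_def distrib_left add_ac)
  qed
  show ?thesis
  proof (induction j)
    case 0
    show ?case
      using step[OF sums_escape_or_0_first_0 sums_escape_or_0_first_0] by simp
  next
    case (Suc j)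
    show ?case
      using step[OF sums_escape_or_0_first_Suc[OF Suc] sums_escape_or_0_first_Suc[OF Suc]]
      by (simp add: algebra_simps)
  qed
qed

definition total_from_0 :: "nat \<Rightarrow> real" where
  "total_from_0 k = (\<Sum>j\<le>k. P0 j (k - j))"

definition total_from_c :: "nat \<Rightarrow> real" where
  "total_from_c k = (\<Sum>j\<le>k. Pc j (k - j))"

lemma antidiagonal_sum_recursion:
  fixes P :: "nat \<Rightarrow> nat \<Rightarrow> real"
  assumes P_rec: "\<And>j m. P j m = (if j = 0 \<and> m = 0 then e else 0)
      + (if 0 < j then a * P0 (j - 1) m else 0) + (if 0 < m then b * Pc j (m - 1) else 0)"
  shows "(\<Sum>j\<le>0. P j (0 - j)) = e"
    and "(\<Sum>j\<le>Suc k. P j (Suc k - j)) = a * total_from_0 k + b * total_from_c k"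
proof -
  show "(\<Sum>j\<le>0. P j (0 - j)) = e"
    using P_rec[of 0 0] by simp
  have "(\<Sum>j\<le>Suc k. P j (Suc k - j)) =
     (\<Sum>j\<le>Suc k. (if 0 < j then a * P0 (j - 1) (Suc k - j) else 0)) +
     (\<Sum>j\<le>Suc k. (if 0 < Suc k - j then b * Pc j (Suc k - j - 1) else 0))"
    by (subst P_rec) (simp add: sum.distrib)
  also have "(\<Sum>j\<le>Suc k. (if 0 < j then a * P0 (j - 1) (Suc k - j) else 0)) = a * total_from_0 k"
    by (subst sum.atMost_Suc_shift) (simp add: total_from_0_def sum_distrib_left)
  also have "(\<Sum>j\<le>Suc k. (if 0 < Suc k - j then b * Pc j (Suc k - j - 1) else 0)) =
      (\<Sum>j\<le>k. b * Pc j (k - j))"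
    by (subst sum.atMost_Suc) (auto intro!: sum.cong simp: Suc_diff_le)
  finally show "(\<Sum>j\<le>Suc k. P j (Suc k - j)) = a * total_from_0 k + b * total_from_c k"
    by (simp add: total_from_c_def sum_distrib_left)
qed

lemma total_from_0_0: "total_from_0 0 = e0"
  and total_from_c_0: "total_from_c 0 = ec"
  and total_from_0_Suc: "total_from_0 (Suc k) = r00 * total_from_0 k + r0c * total_from_c k"
  and total_from_c_Suc: "total_from_c (Suc k) = rc0 * total_from_0 k + rcc * total_from_c k"
  using antidiagonal_sum_recursion[OF P0_rec] antidiagonal_sum_recursion[OF Pc_rec]
  by (simp_all add: total_from_0_def total_from_c_def)

text \<open>Eliminating \<open>total_from_c\<close> gives a second order recurrence for \<open>total_from_0\<close> whose characteristic
  polynomial has the roots \<open>l1\<close>, \<open>l2\<close>.\<close>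

lemma total_from_0_closed_form:
  assumes roots: "l1 + l2 = r00 + rcc" "l1 * l2 = r00 * rcc - r0c * rc0"
    and initial: "e0 = \<alpha> + \<beta>" "r00 * e0 + r0c * ec = \<alpha> * l1 + \<beta> * l2"
  shows "total_from_0 k = \<alpha> * l1 ^ k + \<beta> * l2 ^ k"
proof -
  have rec2: "total_from_0 (Suc (Suc k)) = (l1 + l2) * total_from_0 (Suc k) - l1 * l2 * total_from_0 k" for k
  proof -
    have "total_from_0 (Suc (Suc k)) =
        r00 * total_from_0 (Suc k) + r0c * rc0 * total_from_0 k + rcc * (r0c * total_from_c k)"
      unfolding total_from_0_Suc[of "Suc k"] total_from_c_Suc by (simp add: algebra_simps)
    also have "r0c * total_from_c k = total_from_0 (Suc k) - r00 * total_from_0 k"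
      using total_from_0_Suc[of k] by simp
    finally show ?thesis
      unfolding roots by (simp add: algebra_simps)
  qed
  have "total_from_0 k = \<alpha> * l1 ^ k + \<beta> * l2 ^ k \<and> total_from_0 (Suc k) = \<alpha> * l1 ^ Suc k + \<beta> * l2 ^ Suc k"
  proof (induction k)
    case 0
    then show ?case
      using initial by (simp add: total_from_0_0 total_from_0_Suc total_from_c_0)
  next
    case (Suc k)
    then show ?case
      by (simp add: rec2 algebra_simps)
  qed
  then show ?thesis
    by simp
qed

end

lemma ruin_coefficient_identities:
  fixes p q h g H :: real
  assumes "1 - H \<noteq> 0" "p * h = q" "p + q = 1" "q * g = p * H"
  shows "p * (1 - (1 - h) / (1 - H)) + q = (2*q - H)/(1-H)"
   "p * ((1 - h) / (1 - H)) = (1 - 2*q) / (1 - H)"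
   "p * h + q * ((1 - g) / (1 - H)) = (2*q - H) / (1 - H)"
   "q * (1 - (1 - g) / (1 - H)) = (1 - 2*q) * H / (1 - H)"
   "p * (1 - h) = 1 - 2 * q"
  using assms by (simp_all add: divide_simps) (algebra)+

lemma generating_function_identities:
  fixes q H w :: real
  assumes "1 - H \<noteq> 0" "1 - 2*q \<noteq> 0" "q \<noteq> 0" "(1 - H) - (2*q - H) * w \<noteq> 0"
  shows "(2*q-H)/(1-H) + (1-2*q)/(1-H) * w * ((1-2*q)*H/(1-H)) / (1 - (2*q-H)/(1-H) * w)
     = 2*q * ((1 - (4*q^2 - H)/(2*q*(1-2*q)) * (w-1)) / (1 - (2*q-H)/(1-2*q)*(w-1)))"
   "(2*q-H)/(1-H) + (1-2*q)*H/(1-H) * w * ((1-2*q)/(1-H)) / (1 - (2*q-H)/(1-H) * w)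
     = 2*q * ((1 - (4*q^2 - H)/(2*q*(1-2*q)) * (w-1)) / (1 - (2*q-H)/(1-2*q)*(w-1)))"
   "0 + (1-2*q)/(1-H) * w * (1 - 2*q) / (1 - (2*q-H)/(1-H) * w) = (1-2*q) * (w / (1 - (2*q-H)/(1-2*q)*(w-1)))"
  using assms by (simp_all add: divide_simps) (algebra)+

lemma characteristic_root_identities:
  fixes q H s :: real
  assumes "s * s = H" "0 < s" "s < 1" "1 - 2*q \<noteq> 0"
  shows "(2*q+s)/(1+s) + (2*q-s)/(1-s) = (2*q-H)/(1-H) + (2*q-H)/(1-H)"
    "(2*q+s)/(1+s) * ((2*q-s)/(1-s)) = (2*q-H)/(1-H) * ((2*q-H)/(1-H)) - (1-2*q)/(1-H) * ((1-2*q)*H/(1-H))"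
    "(2*q+s)/(1+s) * ((2*q-s)/(1-s)) = (2*q-H)/(1-H) * ((2*q-H)/(1-H)) - (1-2*q)*H/(1-H) * ((1-2*q)/(1-H))"
    "(2*q-H)/(1-H) * 0 + (1-2*q)/(1-H) * (1 - 2*q) = (1-2*q)/(2 * s) * ((2*q+s)/(1+s)) + (-(1-2*q)/(2 * s)) * ((2*q-s)/(1-s))"
    "(2*q-H)/(1-H) * (1 - 2*q) + (1-2*q)*H/(1-H) * 0 = (1-2*q)/2 * ((2*q+s)/(1+s)) + (1-2*q)/2 * ((2*q-s)/(1-s))"
    "(1-2*q)/(2 * s) / (1 - (2*q+s)/(1+s)) + (-(1-2*q)/(2 * s)) / (1 - (2*q-s)/(1-s)) = 1"
    "(1-2*q)/2 / (1 - (2*q+s)/(1+s)) + (1-2*q)/2 / (1 - (2*q-s)/(1-s)) = 1"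
proof -
  have "s * s < 1 * 1" using assms by (intro mult_strict_mono) auto
  then have h1: "1 - H \<noteq> 0" "1 + s \<noteq> 0" "1 - s \<noteq> 0" using assms by auto
  have h2: "1 + s - (2*q+s) \<noteq> 0" "1 - s - (2*q-s) \<noteq> 0" using assms by auto
  show "(2*q+s)/(1+s) + (2*q-s)/(1-s) = (2*q-H)/(1-H) + (2*q-H)/(1-H)"
    "(2*q+s)/(1+s) * ((2*q-s)/(1-s)) = (2*q-H)/(1-H) * ((2*q-H)/(1-H)) - (1-2*q)/(1-H) * ((1-2*q)*H/(1-H))"
    "(2*q+s)/(1+s) * ((2*q-s)/(1-s)) = (2*q-H)/(1-H) * ((2*q-H)/(1-H)) - (1-2*q)*H/(1-H) * ((1-2*q)/(1-H))"
    "(2*q-H)/(1-H) * 0 + (1-2*q)/(1-H) * (1 - 2*q) = (1-2*q)/(2 * s) * ((2*q+s)/(1+s)) + (-(1-2*q)/(2 * s)) * ((2*q-s)/(1-s))"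
    "(2*q-H)/(1-H) * (1 - 2*q) + (1-2*q)*H/(1-H) * 0 = (1-2*q)/2 * ((2*q+s)/(1+s)) + (1-2*q)/2 * ((2*q-s)/(1-s))"
    using assms h1 by (simp_all add: divide_simps assms(1)[symmetric]) (algebra)+
  show "(1-2*q)/(2 * s) / (1 - (2*q+s)/(1+s)) + (-(1-2*q)/(2 * s)) / (1 - (2*q-s)/(1-s)) = 1"
    "(1-2*q)/2 / (1 - (2*q+s)/(1+s)) + (1-2*q)/2 / (1 - (2*q-s)/(1-s)) = 1"
    using assms h1 h2 by (simp_all add: divide_simps assms(1)[symmetric]) (algebra)+
qed

section \<open>Decomposition at the first visit\<close>

context pm_walk
begin

definition first_visit_prob :: "int \<Rightarrow> int \<Rightarrow> int \<Rightarrow> real" where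
  "first_visit_prob c y b = Pr (\<lambda>s. \<exists>n. first_visit c y s n b)"

definition escape_prob :: "int \<Rightarrow> int \<Rightarrow> real" where
  "escape_prob c y = Pr (escapes c y)"

lemma Pr_first_visit_sdrop:
  assumes "{s. Q s} \<in> sets S"
  shows "Pr (\<lambda>s. \<exists>n. first_visit c y s n b \<and> Q (sdrop n s)) = first_visit_prob c y b * Pr Q"
  unfolding first_visit_prob_def
  by (rule Pr_strong_markov[OF _ assms])
     (auto intro: sets_S_Collect simp: first_visit_stake_shift dest: first_visit_unique)

lemma Pr_visit_counts_recursion:
  assumes "c \<noteq> 0"
  shows "Pr (visit_counts c y j m) = (if j = 0 \<and> m = 0 then escape_prob c y else 0)
     + (if 0 < j then first_visit_prob c y 0 * Pr (visit_counts c 0 (j - 1) m) else 0)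
     + (if 0 < m then first_visit_prob c y c * Pr (visit_counts c c j (m - 1)) else 0)"
proof -
  let ?A = "\<lambda>s. escapes c y s \<and> j = 0 \<and> m = 0"
  let ?B = "\<lambda>s. \<exists>n. first_visit c y s n 0 \<and> 0 < j \<and> visit_counts c 0 (j - 1) m (sdrop n s)"
  let ?C = "\<lambda>s. \<exists>n. first_visit c y s n c \<and> 0 < m \<and> visit_counts c c j (m - 1) (sdrop n s)"
  have sets: "{s. ?A s} \<in> sets S" "{s. ?B s} \<in> sets S" "{s. ?C s} \<in> sets S"
    "{s. ?A s \<or> ?B s} \<in> sets S"
    by (rule sets_S_Collect, measurable)+
  have "Pr (visit_counts c y j m) = Pr (\<lambda>s. (?A s \<or> ?B s) \<or> ?C s)"
    by (rule Pr_cong) (use visit_counts_first_visit_decomp[OF assms] in blast)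
  also have "\<dots> = Pr (\<lambda>s. ?A s \<or> ?B s) + Pr ?C"
    by (rule Pr_disj[OF sets(4,3)]) (use assms in \<open>auto dest: first_visit_unique first_visit_not_escapes\<close>)
  also have "Pr (\<lambda>s. ?A s \<or> ?B s) = Pr ?A + Pr ?B"
    by (rule Pr_disj[OF sets(1,2)]) (auto dest: first_visit_not_escapes)
  also have "Pr ?A = (if j = 0 \<and> m = 0 then escape_prob c y else 0)"
    by (auto simp: escape_prob_def Pr_def)
  also have "Pr ?B = (if 0 < j then first_visit_prob c y 0 * Pr (visit_counts c 0 (j - 1) m) else 0)"
    using Pr_first_visit_sdrop[OF sets_S_Collect[OF pred_visit_counts], of c y 0]
    by (cases "0 < j") (simp_all add: Pr_def)
  also have "Pr ?C = (if 0 < m then first_visit_prob c y c * Pr (visit_counts c c j (m - 1)) else 0)"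
    using Pr_first_visit_sdrop[OF sets_S_Collect[OF pred_visit_counts], of c y c]
    by (cases "0 < m") (simp_all add: Pr_def)
  finally show ?thesis .
qed

lemma Pr_total_visits:
  assumes "c \<noteq> 0"
  shows "Pr (total_visits c y k) = (\<Sum>j\<le>k. Pr (visit_counts c y j (k - j)))"
proof -
  have "Pr (total_visits c y k) = measure S (\<Union>j\<in>{..k}. {s. visit_counts c y j (k - j) s})"
    unfolding Pr_def using total_visits_iff[OF assms] by (intro arg_cong[where f="measure S"]) auto
  also have "\<dots> = (\<Sum>j\<le>k. measure S {s. visit_counts c y j (k - j) s})"
  proof (rule S.finite_measure_finite_Union)
    show "disjoint_family_on (\<lambda>j. {s. visit_counts c y j (k - j) s}) {..k}"
      by (auto simp: disjoint_family_on_def visit_counts_def)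
  qed (auto intro: sets_S_Collect)
  finally show ?thesis
    by (simp add: Pr_def)
qed

lemma first_visit_prob_first_step:
  assumes "c \<noteq> 0" "b = 0 \<or> b = c" "b' = (if b = 0 then c else 0)"
  shows "first_visit_prob c y b = p * Pr (hits_avoiding b' b (y + 1)) + q * Pr (hits_avoiding b' b (y - 1))"
  using Pr_first_step[where Q="\<lambda>x. hits_avoiding b' b (y + x)" and P="\<lambda>s. \<exists>n. first_visit c y s n b"]
  by (simp add: first_visit_prob_def first_visit_Cons[OF assms(2,3,1)] sets_S_Collect)

lemma Pr_avoids:
  assumes "c \<noteq> 0"
  shows "Pr (avoids c y) = 1 - Pr (hits_avoiding c 0 y) - Pr (hits_avoiding 0 c y)"
proof -
  have "1 = Pr (\<lambda>s. (avoids c y s \<or> hits_avoiding c 0 y s) \<or> hits_avoiding 0 c y s)"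
    using avoids_or_hits by (simp add: Pr_def)
  also have "\<dots> = Pr (\<lambda>s. avoids c y s \<or> hits_avoiding c 0 y s) + Pr (hits_avoiding 0 c y)"
    using avoids_hits_exclusive[OF assms] by (intro Pr_disj sets_S_Collect) (auto; measurable)+
  also have "Pr (\<lambda>s. avoids c y s \<or> hits_avoiding c 0 y s) = Pr (avoids c y) + Pr (hits_avoiding c 0 y)"
    using avoids_hits_exclusive[OF assms] by (intro Pr_disj sets_S_Collect) (auto; measurable)+
  finally show ?thesis
    by simp
qed

lemma escape_prob_first_step:
  assumes "c \<noteq> 0"
  shows "escape_prob c y =
    p * (1 - Pr (hits_avoiding c 0 (y + 1)) - Pr (hits_avoiding 0 c (y + 1))) +
    q * (1 - Pr (hits_avoiding c 0 (y - 1)) - Pr (hits_avoiding 0 c (y - 1)))"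
  using Pr_first_step[where Q="\<lambda>x. avoids c (y + x)" and P="escapes c y"]
  by (simp add: escape_prob_def escapes_Cons sets_S_Collect Pr_avoids[OF assms])

lemma visit_recursion_visit_counts:
  assumes "c \<noteq> 0"
  shows "visit_recursion (\<lambda>j m. Pr (visit_counts c 0 j m)) (\<lambda>j m. Pr (visit_counts c c j m))
    (escape_prob c 0) (escape_prob c c) (first_visit_prob c 0 0) (first_visit_prob c 0 c)
    (first_visit_prob c c 0) (first_visit_prob c c c)"
  by unfold_locales (use Pr_visit_counts_recursion[OF assms] in auto)

end

section \<open>The case \<open>c = \<plusminus>z\<close>\<close>

context pm_walk
begin

definition sqrt_hz :: "nat \<Rightarrow> real" where
  "sqrt_hz z = h powr (real z / 2)"

definition root_plus :: "nat \<Rightarrow> real" where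
  "root_plus z = (2*q + sqrt_hz z) / (1 + sqrt_hz z)"

definition root_minus :: "nat \<Rightarrow> real" where
  "root_minus z = (2*q - sqrt_hz z) / (1 - sqrt_hz z)"

context
  fixes z :: nat
  assumes z_pos: "0 < z"
begin

lemma hz_pos: "0 < h ^ z" and hz_less_1: "h ^ z < 1" and hz_le_h: "h ^ z \<le> h"
  using h_pos h_less_1 z_pos power_decreasing[of 1 z h] by (simp_all add: power_less_one_iff)

lemma hz_less_2q: "h ^ z < 2 * q"
proof -
  have "q * 1 < q * (2 * p)"
    using q_pos q_less_p p_plus_q by (intro mult_strict_left_mono) auto
  then have "h < 2 * q"
    using p_pos by (simp add: h_def divide_simps)
  then show ?thesis
    using hz_le_h by simp
qed

lemma hz_eq: "q * h ^ (z - 1) = p * h ^ z"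
  using z_pos p_times_h by (cases z) (simp_all add: algebra_simps)

lemma coefficients_pos:
  "first_visit_prob (int z) 0 0 = (2*q - h^z) / (1 - h^z)"
  "first_visit_prob (int z) 0 (int z) = (1 - 2*q) / (1 - h^z)"
  "first_visit_prob (int z) (int z) 0 = (1 - 2*q) * h^z / (1 - h^z)"
  "first_visit_prob (int z) (int z) (int z) = (2*q - h^z) / (1 - h^z)"
  "escape_prob (int z) 0 = 0"
  "escape_prob (int z) (int z) = 1 - 2*q"
proof -
  have z: "int z \<noteq> 0" "nat (int z - 1) = z - 1" "nat (int z) = z"
    using z_pos by auto
  have "1 - h^z \<noteq> 0"
    using hz_less_1 by simp
  note id = ruin_coefficient_identities[OF this p_times_h p_plus_q hz_eq]
  note ruin = Pr_hits_avoiding_upper[of 0 "int z"] Pr_hits_avoiding_lower[of 0 "int z"]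
    Pr_hits_avoiding_from_below[of "-1" 0 "int z"] Pr_hits_avoiding_from_above[of 0 "int z" "int z + 1"]
  note first = first_visit_prob_first_step[OF z(1)] and esc = escape_prob_first_step[OF z(1)]
  show "first_visit_prob (int z) 0 0 = (2*q - h^z) / (1 - h^z)"
    using id(1) z_pos z by (simp add: first ruin)
  show "first_visit_prob (int z) 0 (int z) = (1 - 2*q) / (1 - h^z)"
    using id(2) z_pos z by (simp add: first ruin)
  show "first_visit_prob (int z) (int z) 0 = (1 - 2*q) * h^z / (1 - h^z)"
    using id(4) z_pos z by (simp add: first ruin)
  show "first_visit_prob (int z) (int z) (int z) = (2*q - h^z) / (1 - h^z)"
    using id(3) z_pos z by (simp add: first ruin)
  show "escape_prob (int z) 0 = 0"
    using z_pos z by (simp add: esc ruin)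
  show "escape_prob (int z) (int z) = 1 - 2*q"
    using id(5) z_pos z by (simp add: esc ruin)
qed

lemma coefficients_neg:
  "first_visit_prob (- int z) 0 0 = (2*q - h^z) / (1 - h^z)"
  "first_visit_prob (- int z) 0 (- int z) = (1 - 2*q) * h^z / (1 - h^z)"
  "first_visit_prob (- int z) (- int z) 0 = (1 - 2*q) / (1 - h^z)"
  "first_visit_prob (- int z) (- int z) (- int z) = (2*q - h^z) / (1 - h^z)"
  "escape_prob (- int z) 0 = 1 - 2*q"
  "escape_prob (- int z) (- int z) = 0"
proof -
  have z: "- int z \<noteq> 0" "nat (- 1 + int z) = z - 1" "nat (int z) = z"
    using z_pos by auto
  have "1 - h^z \<noteq> 0"
    using hz_less_1 by simp
  note id = ruin_coefficient_identities[OF this p_times_h p_plus_q hz_eq]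
  note ruin = Pr_hits_avoiding_upper[of "- int z" 0] Pr_hits_avoiding_lower[of "- int z" 0]
    Pr_hits_avoiding_from_below[of "- int z - 1" "- int z" 0] Pr_hits_avoiding_from_above[of "- int z" 0 1]
  note first = first_visit_prob_first_step[OF z(1)] and esc = escape_prob_first_step[OF z(1)]
  show "first_visit_prob (- int z) 0 0 = (2*q - h^z) / (1 - h^z)"
    using id(3) z_pos z by (simp add: first ruin)
  show "first_visit_prob (- int z) 0 (- int z) = (1 - 2*q) * h^z / (1 - h^z)"
    using id(4) z_pos z by (simp add: first ruin)
  show "first_visit_prob (- int z) (- int z) 0 = (1 - 2*q) / (1 - h^z)"
    using id(2) z_pos z by (simp add: first ruin)
  show "first_visit_prob (- int z) (- int z) (- int z) = (2*q - h^z) / (1 - h^z)"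
    using id(1) z_pos z by (simp add: first ruin)
  show "escape_prob (- int z) 0 = 1 - 2*q"
    using id(5) z_pos z by (simp add: esc ruin)
  show "escape_prob (- int z) (- int z) = 0"
    using z_pos z by (simp add: esc ruin)
qed

interpretation pos: visit_recursion "\<lambda>j m. Pr (visit_counts (int z) 0 j m)"
  "\<lambda>j m. Pr (visit_counts (int z) (int z) j m)" "escape_prob (int z) 0" "escape_prob (int z) (int z)"
  "first_visit_prob (int z) 0 0" "first_visit_prob (int z) 0 (int z)"
  "first_visit_prob (int z) (int z) 0" "first_visit_prob (int z) (int z) (int z)"
  using z_pos by (intro visit_recursion_visit_counts) simp

interpretation neg: visit_recursion "\<lambda>j m. Pr (visit_counts (- int z) 0 j m)"
  "\<lambda>j m. Pr (visit_counts (- int z) (- int z) j m)" "escape_prob (- int z) 0" "escape_prob (- int z) (- int z)"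
  "first_visit_prob (- int z) 0 0" "first_visit_prob (- int z) 0 (- int z)"
  "first_visit_prob (- int z) (- int z) 0" "first_visit_prob (- int z) (- int z) (- int z)"
  using z_pos by (intro visit_recursion_visit_counts) simp

lemma phi_fun_eq:
  "phi_fun q z v = (1 - (4*q^2 - h^z) / (2*q*(1 - 2*q)) * (exp v - 1)) /
    (1 - (2*q - h^z) / (1 - 2*q) * (exp v - 1))"
  and psi_fun_eq: "psi_fun q z v = exp v / (1 - (2*q - h^z) / (1 - 2*q) * (exp v - 1))"
proof -
  have "q / (1 - q) = h"
    using p_plus_q by (simp add: h_def)
  then show "phi_fun q z v = (1 - (4*q^2 - h^z) / (2*q*(1 - 2*q)) * (exp v - 1)) /
      (1 - (2*q - h^z) / (1 - 2*q) * (exp v - 1))"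
    and "psi_fun q z v = exp v / (1 - (2*q - h^z) / (1 - 2*q) * (exp v - 1))"
    by (simp_all add: phi_fun_def psi_fun_def Let_def)
qed

lemma gf_visit_counts_pos:
  assumes v: "(2*q - h^z) / (1 - h^z) * exp v < 1"
  shows "(\<lambda>m. exp v ^ m * Pr (visit_counts (int z) 0 k m))
    sums ((1 - 2*q) * (2*q)^k * phi_fun q z v ^ k * psi_fun q z v)"
proof -
  have nz: "1 - h^z \<noteq> 0" "1 - 2*q \<noteq> 0" "q \<noteq> 0" "(1 - h^z) - (2*q - h^z) * exp v \<noteq> 0"
    using v hz_less_1 q_less_half q_pos by (auto simp: field_simps)
  have "(\<lambda>m. exp v ^ m * Pr (visit_counts (int z) 0 k m))
      sums ((1 - 2*q) * psi_fun q z v * (2*q * phi_fun q z v) ^ k)"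
    by (rule pos.gf_P0_sums[of "exp v" k, unfolded coefficients_pos
          generating_function_identities(1,3)[OF nz] phi_fun_eq[symmetric] psi_fun_eq[symmetric]])
      (use v hz_pos hz_less_1 hz_less_2q q_less_half in \<open>auto intro: Pr_nonneg\<close>)
  then show ?thesis
    by (simp add: power_mult_distrib mult_ac)
qed

lemma gf_visit_counts_neg:
  assumes v: "(2*q - h^z) / (1 - h^z) * exp v < 1"
  shows "(\<lambda>m. exp v ^ m * Pr (visit_counts (- int z) 0 k m))
    sums ((1 - 2*q) * (2*q)^k * phi_fun q z v ^ k)"
proof -
  have nz: "1 - h^z \<noteq> 0" "1 - 2*q \<noteq> 0" "q \<noteq> 0" "(1 - h^z) - (2*q - h^z) * exp v \<noteq> 0"
    using v hz_less_1 q_less_half q_pos by (auto simp: field_simps)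
  have "(\<lambda>m. exp v ^ m * Pr (visit_counts (- int z) 0 k m))
      sums ((1 - 2*q) * (2*q * phi_fun q z v) ^ k)"
    by (rule neg.gf_P0_sums[of "exp v" k, unfolded coefficients_neg
          generating_function_identities(2)[OF nz] phi_fun_eq[symmetric] mult_zero_right div_0
          add_0_right])
      (use v hz_pos hz_less_1 hz_less_2q q_less_half in \<open>auto intro: Pr_nonneg\<close>)
  then show ?thesis
    by (simp add: power_mult_distrib mult_ac)
qed

lemma sqrt_hz_square: "sqrt_hz z * sqrt_hz z = h ^ z"
  using h_pos by (simp add: sqrt_hz_def powr_add[symmetric] powr_realpow)

lemma sqrt_hz_pos: "0 < sqrt_hz z" and sqrt_hz_less_1: "sqrt_hz z < 1"
proof -
  show "0 < sqrt_hz z"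
    using h_pos by (simp add: sqrt_hz_def)
  show "sqrt_hz z < 1"
  proof (rule ccontr)
    assume "\<not> sqrt_hz z < 1"
    then have "1 * 1 \<le> sqrt_hz z * sqrt_hz z"
      by (intro mult_mono) auto
    then show False
      using sqrt_hz_square hz_less_1 by simp
  qed
qed

lemma root_identities:
  "root_plus z + root_minus z = (2*q - h^z) / (1 - h^z) + (2*q - h^z) / (1 - h^z)"
  "root_plus z * root_minus z = (2*q - h^z) / (1 - h^z) * ((2*q - h^z) / (1 - h^z))
     - (1 - 2*q) / (1 - h^z) * ((1 - 2*q) * h^z / (1 - h^z))"
  "root_plus z * root_minus z = (2*q - h^z) / (1 - h^z) * ((2*q - h^z) / (1 - h^z))
     - (1 - 2*q) * h^z / (1 - h^z) * ((1 - 2*q) / (1 - h^z))"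
  "(2*q - h^z) / (1 - h^z) * 0 + (1 - 2*q) / (1 - h^z) * (1 - 2*q)
     = (1 - 2*q) / (2 * sqrt_hz z) * root_plus z + (- (1 - 2*q) / (2 * sqrt_hz z)) * root_minus z"
  "(2*q - h^z) / (1 - h^z) * (1 - 2*q) + (1 - 2*q) * h^z / (1 - h^z) * 0
     = (1 - 2*q) / 2 * root_plus z + (1 - 2*q) / 2 * root_minus z"
  "(1 - 2*q) / (2 * sqrt_hz z) / (1 - root_plus z) + (- (1 - 2*q) / (2 * sqrt_hz z)) / (1 - root_minus z) = 1"
  "(1 - 2*q) / 2 / (1 - root_plus z) + (1 - 2*q) / 2 / (1 - root_minus z) = 1"
  unfolding root_plus_def root_minus_def
  using characteristic_root_identities[OF sqrt_hz_square sqrt_hz_pos sqrt_hz_less_1] q_less_half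
  by simp_all

lemma Pr_total_visits_pos:
  "Pr (total_visits (int z) 0 k) =
     (1 - 2*q) / (2 * sqrt_hz z) * root_plus z ^ k + (- (1 - 2*q) / (2 * sqrt_hz z)) * root_minus z ^ k"
proof -
  have "Pr (total_visits (int z) 0 k) = pos.total_from_0 k"
    using z_pos by (simp add: Pr_total_visits pos.total_from_0_def)
  also have "\<dots> = (1 - 2*q) / (2 * sqrt_hz z) * root_plus z ^ k + (- (1 - 2*q) / (2 * sqrt_hz z)) * root_minus z ^ k"
    by (rule pos.total_from_0_closed_form; unfold coefficients_pos) (fact root_identities | simp add: divide_simps)+
  finally show ?thesis .
qed

lemma Pr_total_visits_neg:
  "Pr (total_visits (- int z) 0 k) = (1 - 2*q) / 2 * root_plus z ^ k + (1 - 2*q) / 2 * root_minus z ^ k"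
proof -
  have "Pr (total_visits (- int z) 0 k) = neg.total_from_0 k"
    using z_pos by (simp add: Pr_total_visits neg.total_from_0_def)
  also have "\<dots> = (1 - 2*q) / 2 * root_plus z ^ k + (1 - 2*q) / 2 * root_minus z ^ k"
    by (rule neg.total_from_0_closed_form; unfold coefficients_neg) (fact root_identities | simp add: divide_simps)+
  finally show ?thesis .
qed

lemma abs_root_plus_less_1: "\<bar>root_plus z\<bar> < 1"
  using sqrt_hz_pos sqrt_hz_less_1 q_pos q_less_half
  by (simp add: root_plus_def divide_simps abs_if)

text \<open>Since \<open>sqrt_hz z\<^sup>2 = h\<^sup>z \<le> h = q / p\<close>, it suffices that \<open>4 q < (1 - q) (1 + 2q)\<^sup>2\<close>,
  i.e.\ \<open>q + 4 q\<^sup>3 < 1\<close>, which holds for \<open>q < 1 / 2\<close>.\<close>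

lemma abs_root_minus_less_1: "\<bar>root_minus z\<bar> < 1"
proof -
  have "q * q * q < 1/8"
    using q_pos q_less_half mult_strict_mono[of q "1/2" "q * q" "1/4"]
      mult_strict_mono[of q "1/2" q "1/2"] by simp
  then have "4 * q < (1 - q) * ((1 + 2*q) * (1 + 2*q))"
    using q_less_half by (simp add: algebra_simps)
  moreover have "p = 1 - q"
    using p_plus_q by simp
  ultimately have "4 * q < p * ((1 + 2*q) * (1 + 2*q))"
    by simp
  then have "4 * h < (1 + 2*q) * (1 + 2*q)"
    using p_pos by (simp add: h_def pos_divide_less_eq mult_ac)
  then have "(2 * sqrt_hz z) * (2 * sqrt_hz z) < (1 + 2*q) * (1 + 2*q)"
    using sqrt_hz_square hz_le_h by simp
  then have "2 * sqrt_hz z < 1 + 2*q"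
    using q_pos sqrt_hz_pos by (smt (verit) mult_mono)
  then show ?thesis
    using sqrt_hz_pos sqrt_hz_less_1 q_pos q_less_half
    by (simp add: root_minus_def divide_simps abs_if)
qed

lemma Pr_finite_visits_pair:
  assumes "c = int z \<or> c = - int z"
  shows "Pr (\<lambda>s. finite (visits_pair c 0 s)) = 1"
proof -
  define A where "A k = {s. total_visits c 0 k s}" for k
  have "range A \<subseteq> sets S"
    unfolding A_def by (auto intro: sets_S_Collect)
  moreover have "disjoint_family A"
    unfolding A_def disjoint_family_on_def total_visits_def by auto
  ultimately have "(\<lambda>k. Pr (total_visits c 0 k)) sums measure S (\<Union>k. A k)"
    using S.finite_measure_UNION[of A] by (simp add: A_def Pr_def)
  moreover have "(\<Union>k. A k) = {s. finite (visits_pair c 0 s)}"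
    unfolding A_def total_visits_def by auto
  moreover have "(\<lambda>k. Pr (total_visits c 0 k)) sums 1"
  proof -
    have geometric: "(\<lambda>k. root_plus z ^ k) sums (1 / (1 - root_plus z))"
      "(\<lambda>k. root_minus z ^ k) sums (1 / (1 - root_minus z))"
      using abs_root_plus_less_1 abs_root_minus_less_1 by (auto intro: geometric_sums)
    show ?thesis
    proof (cases "c = int z")
      case True
      have "(\<lambda>k. Pr (total_visits c 0 k)) =
          (\<lambda>k. (1 - 2*q) / (2 * sqrt_hz z) * root_plus z ^ k + (- (1 - 2*q) / (2 * sqrt_hz z)) * root_minus z ^ k)"
        using True by (simp add: Pr_total_visits_pos)
      moreover have "\<dots> sums ((1 - 2*q) / (2 * sqrt_hz z) * (1 / (1 - root_plus z)) +
          (- (1 - 2*q) / (2 * sqrt_hz z)) * (1 / (1 - root_minus z)))"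
        by (intro sums_add sums_mult geometric)
      ultimately show ?thesis
        using root_identities(6) by simp
    next
      case False
      then have "(\<lambda>k. Pr (total_visits c 0 k)) =
          (\<lambda>k. (1 - 2*q) / 2 * root_plus z ^ k + (1 - 2*q) / 2 * root_minus z ^ k)"
        using assms by (simp add: Pr_total_visits_neg)
      moreover have "\<dots> sums ((1 - 2*q) / 2 * (1 / (1 - root_plus z)) + (1 - 2*q) / 2 * (1 / (1 - root_minus z)))"
        by (intro sums_add sums_mult geometric)
      ultimately show ?thesis
        using root_identities(7) by simp
    qed
  qed
  ultimately show ?thesis
    by (simp add: Pr_def sums_unique2)
qed

end

end

section \<open>Transfer to the given walk\<close>

text \<open>On a stream of arbitrary integers, \<open>local_time\<close> is \<open>xi\<close> computed from the raw values; it agrees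
  with the visit counts of \<open>stream_walk\<close> as soon as all entries are \<open>\<plusminus>1\<close>. As in \<open>xi\<close>, an infinite
  set of visits has cardinality \<open>0\<close>.\<close>

definition int_walk :: "int stream \<Rightarrow> nat \<Rightarrow> int" where
  "int_walk s n = (\<Sum>i<n. s !! i)"

definition local_time :: "int stream \<Rightarrow> int \<Rightarrow> nat" where
  "local_time s x = card {k. 1 \<le> k \<and> int_walk s k = x}"

lemma pred_int_walk_eq [measurable]:
  "Measurable.pred (stream_space (count_space UNIV)) (\<lambda>s. int_walk s m = d)"
  using pred_stake[where n=m and Q="\<lambda>l. (\<Sum>i<m. l ! i) = d"] by (simp add: int_walk_def)

lemma measurable_local_time:
  "(\<lambda>s. local_time s x) \<in> measurable (stream_space (count_space UNIV)) (count_space UNIV)"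
proof (subst measurable_count_space_eq2_countable, safe)
  fix j :: nat
  have "(\<lambda>s. local_time s x) -` {j} \<inter> space (stream_space (count_space UNIV)) =
     {s \<in> space (stream_space (count_space UNIV)).
        (finite {k. 1 \<le> k \<and> int_walk s k = x} \<and> card {k. 1 \<le> k \<and> int_walk s k = x} = j) \<or>
        (j = 0 \<and> \<not> finite {k. 1 \<le> k \<and> int_walk s k = x})}"
    by (auto simp: local_time_def dest: card_ge_0_finite)
  also have "\<dots> \<in> sets (stream_space (count_space UNIV))"
    by (rule predE, intro pred_intros_logic pred_finite_card_eq pred_finite) measurable
  finally show "(\<lambda>s. local_time s x) -` {j} \<inter> space (stream_space (count_space UNIV))
      \<in> sets (stream_space (count_space UNIV))" .
qed auto

lemma local_time_eq_card_visits:
  assumes "\<forall>i. s !! i = 1 \<or> s !! i = -1"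
  shows "local_time s x = card (visits x 0 s)"
proof -
  have "int_walk s n = stream_walk s n" for n
    unfolding int_walk_def stream_walk_def using assms by (intro sum.cong) (auto simp: unit_step_def)
  then show ?thesis
    by (simp add: local_time_def visits_def)
qed

definition step_stream :: "(nat \<Rightarrow> 'a \<Rightarrow> int) \<Rightarrow> 'a \<Rightarrow> int stream" where
  "step_stream X \<omega> = to_stream (\<lambda>n. X (Suc n) \<omega>)"

lemma xi_eq_local_time: "xi X x \<omega> = local_time (step_stream X \<omega>) x"
proof -
  have "walk X n \<omega> = int_walk (step_stream X \<omega>) n" for n
    unfolding walk_def int_walk_def step_stream_def to_stream_def by (simp add: sum.atLeast1_atMost_eq)
  then show ?thesis
    by (simp add: xi_def local_time_def)
qed

lemma ennreal_exp_local_time_eq_suminf: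
  assumes "\<forall>i. s !! i = 1 \<or> s !! i = -1" "finite (visits_pair c 0 s)"
  shows "ennreal (exp (v * real (local_time s c)) * indicator {s. local_time s 0 = k} s) =
    (\<Sum>m. ennreal (exp v ^ m) * indicator {s. visit_counts c 0 k m s} s)"
proof -
  have counts: "visit_counts c 0 k m s \<longleftrightarrow> local_time s 0 = k \<and> local_time s c = m" for m
    using assms by (auto simp: visit_counts_def visits_pair_eq local_time_eq_card_visits)
  show ?thesis
  proof (cases "local_time s 0 = k")
    case True
    have "(\<lambda>m. ennreal (exp v ^ m) * indicator {s. visit_counts c 0 k m s} s) =
        (\<lambda>m. if m = local_time s c then ennreal (exp v ^ local_time s c) else 0)"
      using True by (auto simp: counts fun_eq_iff)
    then have "(\<Sum>m. ennreal (exp v ^ m) * indicator {s. visit_counts c 0 k m s} s) =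
        ennreal (exp v ^ local_time s c)"
      using sums_unique[OF sums_single[of "local_time s c" "\<lambda>_. ennreal (exp v ^ local_time s c)"]]
      by simp
    moreover have "exp (v * real (local_time s c)) = exp v ^ local_time s c"
      using exp_of_nat_mult[of "local_time s c" v] by (simp add: mult.commute)
    ultimately show ?thesis
      using True by simp
  qed (simp add: counts)
qed

locale simple_walk =
  fixes M :: "'a measure" and X :: "nat \<Rightarrow> 'a \<Rightarrow> int" and p q :: real
  assumes prob_space_M: "prob_space M"
    and q_pos: "0 < q" and q_less_p: "q < p" and p_plus_q: "p + q = 1"
    and indep_X: "prob_space.indep_vars M (\<lambda>_. count_space UNIV) X {1..}"
    and prob_X_up: "\<And>i. i \<ge> 1 \<Longrightarrow> measure M {\<omega>\<in>space M. X i \<omega> = 1} = p"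
    and prob_X_down: "\<And>i. i \<ge> 1 \<Longrightarrow> measure M {\<omega>\<in>space M. X i \<omega> = -1} = q"
begin

interpretation M: prob_space M
  by (rule prob_space_M)

definition step_law :: "int measure" where
  "step_law = distr M (count_space UNIV) (X 1)"

lemma measurable_X: "i \<ge> 1 \<Longrightarrow> X i \<in> measurable M (count_space UNIV)"
  using indep_X unfolding M.indep_vars_def by auto

lemma emeasure_distr_X: "i \<ge> 1 \<Longrightarrow> emeasure (distr M (count_space UNIV) (X i)) A = measure M {\<omega>\<in>space M. X i \<omega> \<in> A}"
  using measurable_X by (subst emeasure_distr) (auto simp: M.emeasure_eq_measure vimage_def Int_def conj_commute)

lemma prob_X_other:
  assumes "i \<ge> 1" "a \<noteq> 1" "a \<noteq> -1"
  shows "measure M {\<omega>\<in>space M. X i \<omega> = a} = 0"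
proof -
  have sets: "{\<omega>\<in>space M. X i \<omega> = b} \<in> sets M" for b
    using measurable_X[OF assms(1)] by measurable
  let ?A = "{\<omega>\<in>space M. X i \<omega> = a}" and ?B = "{\<omega>\<in>space M. X i \<omega> = 1} \<union> {\<omega>\<in>space M. X i \<omega> = -1}"
  have "measure M ?B = measure M {\<omega>\<in>space M. X i \<omega> = 1} + measure M {\<omega>\<in>space M. X i \<omega> = -1}"
    by (rule M.finite_measure_Union[OF sets sets]) auto
  then have "measure M ?B = 1"
    using prob_X_up[OF assms(1)] prob_X_down[OF assms(1)] p_plus_q by simp
  moreover have "measure M (?A \<union> ?B) = measure M ?A + measure M ?B"
    using assms sets by (intro M.finite_measure_Union) auto
  ultimately show ?thesis
    using M.prob_le_1[of "?A \<union> ?B"] measure_nonneg[of M ?A] by linarith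
qed

lemma distr_X_eq_step_law:
  assumes "i \<ge> 1"
  shows "distr M (count_space UNIV) (X i) = step_law"
  unfolding step_law_def
proof (rule measure_eqI_countable[where A=UNIV])
  fix a :: int
  show "emeasure (distr M (count_space UNIV) (X i)) {a} = emeasure (distr M (count_space UNIV) (X 1)) {a}"
    using assms prob_X_up prob_X_down prob_X_other by (cases "a = 1 \<or> a = -1") (auto simp: emeasure_distr_X)
qed auto

lemma pm_walk_step_law: "pm_walk step_law p q"
proof (rule pm_walk.intro)
  show "prob_space step_law"
    unfolding step_law_def using measurable_X[of 1] by (intro M.prob_space_distr) auto
  show "sets step_law = sets (count_space UNIV)"
    by (simp add: step_law_def)
  show "emeasure step_law {1} = ennreal p"
    using prob_X_up[of 1] by (simp add: step_law_def emeasure_distr_X)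
  have "{\<omega>\<in>space M. X 1 \<omega> \<in> UNIV - {1}} = space M - {\<omega>\<in>space M. X 1 \<omega> = 1}"
    by auto
  moreover have "{\<omega>\<in>space M. X 1 \<omega> = 1} \<in> sets M"
    using measurable_X[of 1] by measurable
  moreover have "1 - p = q"
    using p_plus_q by simp
  ultimately show "emeasure step_law (UNIV - {1}) = ennreal q"
    using prob_X_up[of 1] by (simp add: step_law_def emeasure_distr_X M.prob_compl)
qed (use q_pos q_less_p p_plus_q in auto)

sublocale R: pm_walk step_law p q
  by (rule pm_walk_step_law)

lemma distr_step_stream: "distr M R.S (step_stream X) = R.S"
  and measurable_step_stream: "step_stream X \<in> measurable M R.S"
proof -
  define T where "T \<omega> = (\<lambda>i\<in>{1::nat..}. X i \<omega>)" for \<omega>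
  define r :: "(nat \<Rightarrow> int) \<Rightarrow> nat \<Rightarrow> int" where "r f = (\<lambda>n\<in>UNIV. f (Suc n))" for f
  have X: "X i \<in> measurable M step_law" if "i \<ge> 1" for i
    using measurable_X[OF that] measurable_cong_sets[OF refl R.sets_N] by blast
  have T: "T \<in> measurable M (PiM {1..} (\<lambda>_. step_law))"
    unfolding T_def by (intro measurable_restrict X) auto
  have r: "r \<in> measurable (PiM {1..} (\<lambda>_. step_law)) (PiM UNIV (\<lambda>_. step_law))"
    unfolding r_def by (intro measurable_restrict measurable_component_singleton) auto
  have "distr M (PiM {1..} (\<lambda>_. step_law)) T = distr M (PiM {1..} (\<lambda>_. count_space UNIV)) T"
    by (intro distr_cong sets_PiM_cong) (auto simp: R.sets_N)
  also have "\<dots> = PiM {1..} (\<lambda>i. distr M (count_space UNIV) (X i))"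
    unfolding T_def by (rule M.indep_vars_iff_distr_eq_PiM'[THEN iffD1, OF _ measurable_X indep_X]) auto
  also have "\<dots> = PiM {1..} (\<lambda>_. step_law)"
    by (intro PiM_cong distr_X_eq_step_law) auto
  finally have distr_T: "distr M (PiM {1..} (\<lambda>_. step_law)) T = PiM {1..} (\<lambda>_. step_law)" .
  have distr_r: "distr (PiM {1..} (\<lambda>_. step_law)) (PiM UNIV (\<lambda>_. step_law)) r = PiM UNIV (\<lambda>_. step_law)"
    unfolding r_def using distr_PiM_reindex[of "{1..}" "\<lambda>_. step_law" Suc UNIV] R.prob_space_N by simp
  have step_stream_eq: "step_stream X = to_stream \<circ> (r \<circ> T)"
    by (rule ext) (simp add: step_stream_def r_def T_def restrict_def)
  show "step_stream X \<in> measurable M R.S"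
    unfolding step_stream_eq using measurable_to_stream r T by (intro measurable_comp)
  have "distr M R.S (step_stream X) =
      distr (distr (distr M (PiM {1..} (\<lambda>_. step_law)) T) (PiM UNIV (\<lambda>_. step_law)) r) R.S to_stream"
    unfolding step_stream_eq using T r measurable_to_stream by (simp add: distr_distr measurable_comp comp_assoc)
  also have "\<dots> = R.S"
    unfolding distr_T distr_r by (rule stream_space_eq_distr[symmetric])
  finally show "distr M R.S (step_stream X) = R.S" .
qed

lemma measure_step_stream_vimage:
  "A \<in> sets R.S \<Longrightarrow> measure M (step_stream X -` A \<inter> space M) = measure R.S A"
  using measure_distr[OF measurable_step_stream, of A] distr_step_stream by simp

lemma integral_step_stream:
  "G \<in> borel_measurable R.S \<Longrightarrow> integral\<^sup>L M (\<lambda>\<omega>. G (step_stream X \<omega>)) = integral\<^sup>L R.S (G :: _ \<Rightarrow> real)"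
  using integral_distr[OF measurable_step_stream, of G] distr_step_stream by simp

lemma AE_unit_steps: "AE s in R.S. \<forall>i. s !! i = 1 \<or> s !! i = -1"
proof -
  have "emeasure step_law (UNIV - {1} - {-1}) = emeasure step_law (UNIV - {1}) - emeasure step_law {-1}"
    using R.sets_N by (subst emeasure_Diff) auto
  also have "\<dots> = 0"
    using R.emeasure_N_down prob_X_down[of 1] by (simp add: step_law_def emeasure_distr_X)
  finally have "AE x in step_law. x = 1 \<or> x = -1"
    using R.sets_N by (intro AE_I'[of "UNIV - {1} - {-1}"]) (auto simp: null_sets_def R.space_N)
  then have "AE s in R.S. stream_all (\<lambda>x. x = 1 \<or> x = -1) s"
    by (intro R.N.AE_stream_all) (auto simp: R.measurable_N)
  then show ?thesis
    unfolding stream_all_def by (rule eventually_mono) (auto simp: snth_sset)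
qed

lemma measurable_local_time_S: "(\<lambda>s. local_time s x) \<in> measurable R.S (count_space UNIV)"
  by (rule R.measurable_S[OF measurable_local_time])

lemma sets_local_time_eq: "{s. local_time s x = j} \<in> sets R.S"
  using measurable_sets[OF measurable_local_time_S, of "{j}"] by (simp add: vimage_def)

context
  fixes z :: nat and c :: int
  assumes z_pos: "0 < z" and c: "c = int z \<or> c = - int z"
begin

lemma AE_good_path: "AE s in R.S. (\<forall>i. s !! i = 1 \<or> s !! i = -1) \<and> finite (visits_pair c 0 s)"
proof -
  have "AE s in R.S. s \<in> {s. finite (visits_pair c 0 s)}"
    by (rule R.S.AE_prob_1) (use R.Pr_finite_visits_pair[OF z_pos c] in \<open>simp add: R.Pr_def\<close>)
  then show ?thesis
    using AE_unit_steps by eventually_elim auto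
qed

lemma prob_Xi_eq_Pr_total_visits:
  "measure M {\<omega>\<in>space M. Xi X {0, c} \<omega> = k} = R.Pr (total_visits c 0 k)"
proof -
  define E where "E = {s. local_time s 0 + local_time s c = k}"
  have E: "E \<in> sets R.S"
  proof -
    have "E = (\<Union>j\<in>{..k}. {s. local_time s 0 = j} \<inter> {s. local_time s c = k - j})"
      unfolding E_def by auto
    then show ?thesis
      using sets_local_time_eq by auto
  qed
  have "{\<omega>\<in>space M. Xi X {0, c} \<omega> = k} = step_stream X -` E \<inter> space M"
    using z_pos c by (auto simp: E_def Xi_def xi_eq_local_time)
  then have "measure M {\<omega>\<in>space M. Xi X {0, c} \<omega> = k} = measure R.S E"
    using measure_step_stream_vimage[OF E] by simp
  also have "\<dots> = measure R.S {s. total_visits c 0 k s}"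
  proof (rule measure_eq_AE)
    show "AE s in R.S. (s \<in> E) = (s \<in> {s. total_visits c 0 k s})"
      using AE_good_path
    proof eventually_elim
      case (elim s)
      then show ?case
        using z_pos c card_Un_disjoint[of "visits 0 0 s" "visits c 0 s"] visits_disjoint[of c 0 s]
        by (auto simp: E_def total_visits_def visits_pair_eq local_time_eq_card_visits)
    qed
  qed (use E in \<open>auto intro: R.sets_S_Collect\<close>)
  finally show ?thesis
    by (simp add: R.Pr_def)
qed

lemma expectation_local_time:
  assumes sums: "(\<lambda>m. exp v ^ m * R.Pr (visit_counts c 0 k m)) sums L"
  shows "prob_space.expectation M (\<lambda>\<omega>. exp (v * real (xi X c \<omega>)) * indicator {\<omega>. xi X 0 \<omega> = k} \<omega>) = L"
proof -
  define G where "G s = exp (v * real (local_time s c)) * indicator {s. local_time s 0 = k} s" for s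
  have G: "G \<in> borel_measurable R.S"
    unfolding G_def using measurable_compose[OF measurable_local_time_S, of "\<lambda>n. exp (v * real n)"]
    by (intro borel_measurable_times borel_measurable_indicator sets_local_time_eq) auto
  have "prob_space.expectation M (\<lambda>\<omega>. exp (v * real (xi X c \<omega>)) * indicator {\<omega>. xi X 0 \<omega> = k} \<omega>)
      = integral\<^sup>L R.S G"
    unfolding integral_step_stream[OF G, symmetric] by (simp add: G_def xi_eq_local_time indicator_def)
  also have "\<dots> = enn2real (\<integral>\<^sup>+s. ennreal (G s) \<partial>R.S)"
    by (rule integral_eq_nn_integral[OF G]) (auto simp: G_def)
  also have "(\<integral>\<^sup>+s. ennreal (G s) \<partial>R.S) =
      (\<integral>\<^sup>+s. (\<Sum>m. ennreal (exp v ^ m) * indicator {s. visit_counts c 0 k m s} s) \<partial>R.S)"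
    using AE_good_path
    by (intro nn_integral_cong_AE, eventually_elim) (simp add: G_def ennreal_exp_local_time_eq_suminf)
  also have "\<dots> = ennreal L"
    by (rule R.nn_integral_suminf_indicator[OF _ _ sums]) (auto intro: R.sets_S_Collect)
  moreover have "0 \<le> L"
    by (rule sums_le[OF _ sums_zero sums]) (simp add: R.Pr_nonneg)
  ultimately show ?thesis
    by simp
qed

end

lemma h_eq: "R.h = q / p"
  by (simp add: R.h_def)

context
  fixes z :: nat
  assumes z_pos: "0 < z"
begin

lemma exp_less_ratio:
  assumes "v < - ln (1 - (1 - 2*q) / (1 - (q/p)^z))"
  shows "(2*q - R.h^z) / (1 - R.h^z) * exp v < 1"
proof -
  have ratio_pos: "0 < (2*q - R.h^z) / (1 - R.h^z)"
    using R.hz_less_1[OF z_pos] R.hz_less_2q[OF z_pos] by simp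
  have "1 - (1 - 2*q) / (1 - x) = (2*q - x) / (1 - x)" if "x < 1" for x :: real
    using that by (simp add: divide_simps)
  then have "1 - (1 - 2*q) / (1 - (q/p)^z) = (2*q - R.h^z) / (1 - R.h^z)"
    using R.hz_less_1[OF z_pos] by (simp add: h_eq)
  then have "ln ((2*q - R.h^z) / (1 - R.h^z)) < - v"
    using assms by simp
  then have "(2*q - R.h^z) / (1 - R.h^z) < exp (- v)"
    using ratio_pos by (metis exp_less_mono exp_ln)
  then have "(2*q - R.h^z) / (1 - R.h^z) * exp v < exp (- v) * exp v"
    by (rule mult_strict_right_mono) simp
  then show ?thesis
    by (simp add: exp_minus)
qed

lemma mgf_xi_pos:
  "\<forall>(k::nat) (v::real). v < - ln (1 - (1 - 2*q) / (1 - (q/p)^z)) \<longrightarrow>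
     prob_space.expectation M (\<lambda>\<omega>. exp (v * real (xi X (int z) \<omega>)) * indicator {\<omega>. xi X 0 \<omega> = k} \<omega>)
     = (1 - 2*q) * (2*q)^k * (phi_fun q z v)^k * psi_fun q z v"
proof (intro allI impI)
  fix k :: nat and v :: real
  assume "v < - ln (1 - (1 - 2*q) / (1 - (q/p)^z))"
  then show "prob_space.expectation M (\<lambda>\<omega>. exp (v * real (xi X (int z) \<omega>)) * indicator {\<omega>. xi X 0 \<omega> = k} \<omega>)
     = (1 - 2*q) * (2*q)^k * (phi_fun q z v)^k * psi_fun q z v"
    by (intro expectation_local_time[OF z_pos _ R.gf_visit_counts_pos[OF z_pos exp_less_ratio]]) simp
qed

lemma mgf_xi_neg:
  "\<forall>(k::nat) (v::real). v < - ln (1 - (1 - 2*q) / (1 - (q/p)^z)) \<longrightarrow>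
     prob_space.expectation M (\<lambda>\<omega>. exp (v * real (xi X (- int z) \<omega>)) * indicator {\<omega>. xi X 0 \<omega> = k} \<omega>)
     = (1 - 2*q) * (2*q)^k * (phi_fun q z v)^k"
proof (intro allI impI)
  fix k :: nat and v :: real
  assume "v < - ln (1 - (1 - 2*q) / (1 - (q/p)^z))"
  then show "prob_space.expectation M (\<lambda>\<omega>. exp (v * real (xi X (- int z) \<omega>)) * indicator {\<omega>. xi X 0 \<omega> = k} \<omega>)
     = (1 - 2*q) * (2*q)^k * (phi_fun q z v)^k"
    by (intro expectation_local_time[OF z_pos _ R.gf_visit_counts_neg[OF z_pos exp_less_ratio]]) simp
qed

lemma sqrt_hz_eq: "R.sqrt_hz z = (q/p) powr (z/2)"
  unfolding R.sqrt_hz_def h_eq ..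

lemma distribution_Xi_pos:
  "\<forall>k::nat. k \<ge> 1 \<longrightarrow>
     measure M {\<omega>\<in>space M. Xi X {0, int z} \<omega> = k}
     = (1 - 2*q) / (2 * (q/p) powr (z/2)) *
       (((2*q + (q/p) powr (z/2)) / (1 + (q/p) powr (z/2)))^k
      - ((2*q - (q/p) powr (z/2)) / (1 - (q/p) powr (z/2)))^k)"
proof (intro allI impI)
  fix k :: nat
  have "measure M {\<omega>\<in>space M. Xi X {0, int z} \<omega> = k} =
      (1 - 2*q) / (2 * R.sqrt_hz z) * R.root_plus z ^ k + (- (1 - 2*q) / (2 * R.sqrt_hz z)) * R.root_minus z ^ k"
    using prob_Xi_eq_Pr_total_visits[OF z_pos] R.Pr_total_visits_pos[OF z_pos] by simp
  also have "\<dots> = (1 - 2*q) / (2 * R.sqrt_hz z) * (R.root_plus z ^ k - R.root_minus z ^ k)"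
    by (simp only: minus_divide_left[symmetric] mult_minus_left diff_conv_add_uminus distrib_left)
  finally show "measure M {\<omega>\<in>space M. Xi X {0, int z} \<omega> = k}
     = (1 - 2*q) / (2 * (q/p) powr (z/2)) *
       (((2*q + (q/p) powr (z/2)) / (1 + (q/p) powr (z/2)))^k
      - ((2*q - (q/p) powr (z/2)) / (1 - (q/p) powr (z/2)))^k)"
    unfolding R.root_plus_def R.root_minus_def sqrt_hz_eq .
qed

lemma distribution_Xi_neg:
  "\<forall>k::nat.
     measure M {\<omega>\<in>space M. Xi X {0, - int z} \<omega> = k}
     = (1 - 2*q) / 2 *
       (((2*q + (q/p) powr (z/2)) / (1 + (q/p) powr (z/2)))^k
      + ((2*q - (q/p) powr (z/2)) / (1 - (q/p) powr (z/2)))^k)"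
proof
  fix k :: nat
  have "measure M {\<omega>\<in>space M. Xi X {0, - int z} \<omega> = k} =
      (1 - 2*q) / 2 * (R.root_plus z ^ k + R.root_minus z ^ k)"
    using prob_Xi_eq_Pr_total_visits[OF z_pos] R.Pr_total_visits_neg[OF z_pos]
    by (simp add: distrib_left)
  then show "measure M {\<omega>\<in>space M. Xi X {0, - int z} \<omega> = k}
     = (1 - 2*q) / 2 *
       (((2*q + (q/p) powr (z/2)) / (1 + (q/p) powr (z/2)))^k
      + ((2*q - (q/p) powr (z/2)) / (1 - (q/p) powr (z/2)))^k)"
    unfolding R.root_plus_def R.root_minus_def sqrt_hz_eq .
qed

end

end

theorem proposition4p1:
  fixes M :: "'a measure" and X :: "nat \<Rightarrow> 'a \<Rightarrow> int" and p q :: real and z :: nat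
  assumes "prob_space M"
    and "0 < q" "q < p" "p < 1" "p + q = 1"
    and "prob_space.indep_vars M (\<lambda>_. count_space UNIV) X {1..}"
    and "\<And>i. i \<ge> 1 \<Longrightarrow> measure M {\<omega>\<in>space M. X i \<omega> = 1} = p"
    and "\<And>i. i \<ge> 1 \<Longrightarrow> measure M {\<omega>\<in>space M. X i \<omega> = -1} = q"
    and "z > 0"
  shows "(\<forall>(k::nat) (v::real). v < - ln (1 - (1 - 2*q) / (1 - (q/p)^z)) \<longrightarrow>
            prob_space.expectation M
              (\<lambda>\<omega>. exp (v * real (xi X (int z) \<omega>)) * indicator {\<omega>. xi X 0 \<omega> = k} \<omega>)
            = (1 - 2*q) * (2*q)^k * (phi_fun q z v)^k * psi_fun q z v)
       \<and> (\<forall>(k::nat) (v::real). v < - ln (1 - (1 - 2*q) / (1 - (q/p)^z)) \<longrightarrow>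
            prob_space.expectation M
              (\<lambda>\<omega>. exp (v * real (xi X (- int z) \<omega>)) * indicator {\<omega>. xi X 0 \<omega> = k} \<omega>)
            = (1 - 2*q) * (2*q)^k * (phi_fun q z v)^k)
       \<and> (\<forall>k::nat. k \<ge> 1 \<longrightarrow>
            measure M {\<omega>\<in>space M. Xi X {0, int z} \<omega> = k}
            = (1 - 2*q) / (2 * (q/p) powr (z/2)) *
              (((2*q + (q/p) powr (z/2)) / (1 + (q/p) powr (z/2)))^k
             - ((2*q - (q/p) powr (z/2)) / (1 - (q/p) powr (z/2)))^k))
       \<and> (\<forall>k::nat.
            measure M {\<omega>\<in>space M. Xi X {0, - int z} \<omega> = k}
            = (1 - 2*q) / 2 *
              (((2*q + (q/p) powr (z/2)) / (1 + (q/p) powr (z/2)))^k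
             + ((2*q - (q/p) powr (z/2)) / (1 - (q/p) powr (z/2)))^k))"
proof -
  interpret simple_walk M X p q
    by (rule simple_walk.intro; fact assms)
  show ?thesis
    using mgf_xi_pos mgf_xi_neg distribution_Xi_pos distribution_Xi_neg \<open>z > 0\<close> by (intro conjI)
qed

end
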